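(* Let $1<p<\infty$, $\frac1p+\frac1q=1$, and suppose $(X,\mathcal{A},\mu|_{\mathcal{A}})$ is purely atomic, with $X=\bigcup_{n\ge1}A_n$ for pairwise disjoint $\mathcal{A}$-atoms $A_n$. Then the bounded WCE operator $T=M_wEM_u$ on $L^p(\Sigma)$ is nuclear if and only if $$\sum_{n=1}^\infty \big(E(|w|^p)(A_n)\big)^{1/p}\big(E(|u|^q)(A_n)\big)^{1/q}<\infty .$$
   Context: $(X,\Sigma,\mu)$ is a complete $\sigma$-finite measure space and $\mathcal{A}\subseteq\Sigma$ is a sub-$\sigma$-algebra with $(X,\mathcal{A},\mu|_{\mathcal{A}})$ $\sigma$-finite; $E$ is the conditional expectation with respect to $\mathcal{A}$, and $Tf=wE(uf)$. For $1<p<\infty$, $T$ is bounded on $L^p(\Sigma)$ iff $(E|w|^p)^{1/p}(E|u|^q)^{1/q}\in L^\infty(\mathcal{A})$, and then $\|T\|$ equals its $L^\infty$-norm. An $\mathcal{A}$-atom is a set $A\in\mathcal{A}$ with $\mu(A)>0$ such that every $F\in\mathcal{A}$, $F\subseteq A$, has $\mu(F)=0$ or $\mu(F)=\mu(A)$; an $\mathcal{A}$-measurable function is a.e. constant on each $\mathcal{A}$-atom, and for an $\mathcal{A}$-measurable $g$, $g(A_n)$ denotes this constant value (so e.g. $E(|w|^p)(A_n)=\frac{1}{\mu(A_n)}\int_{A_n}|w|^p\,d\mu$). A bounded operator is nuclear if $Tx=\sum_n f_n(x)y_n$ with $f_n$ in the dual, and $\sum_n\|f_n\|\|y_n\|<\infty$.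 *)

theory Defs
  imports "HOL-Probability.Probability"
begin

text \<open>Real L^p spaces over a measure space M, represented by measurable real functions
  (elements of L^p are a.e.-classes; all notions below are invariant under a.e. equality).\<close>

definition memLp :: "real \<Rightarrow> 'a measure \<Rightarrow> ('a \<Rightarrow> real) \<Rightarrow> bool" where
  "memLp p M f \<longleftrightarrow> f \<in> borel_measurable M \<and> integrable M (\<lambda>x. \<bar>f x\<bar> powr p)"

definition Lp_norm :: "real \<Rightarrow> 'a measure \<Rightarrow> ('a \<Rightarrow> real) \<Rightarrow> real" where
  "Lp_norm p M f = (\<integral>x. \<bar>f x\<bar> powr p \<partial>M) powr (1 / p)"

definition bounded_op_Lp :: "real \<Rightarrow> 'a measure \<Rightarrow> (('a \<Rightarrow> real) \<Rightarrow> ('a \<Rightarrow> real)) \<Rightarrow> bool" where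
  "bounded_op_Lp p M T \<longleftrightarrow>
     (\<forall>f. memLp p M f \<longrightarrow> memLp p M (T f)) \<and>
     (\<forall>f g. memLp p M f \<longrightarrow> memLp p M g \<longrightarrow> (AE x in M. T (\<lambda>y. f y + g y) x = T f x + T g x)) \<and>
     (\<forall>c f. memLp p M f \<longrightarrow> (AE x in M. T (\<lambda>y. c * f y) x = c * T f x)) \<and>
     (\<exists>C. \<forall>f. memLp p M f \<longrightarrow> Lp_norm p M (T f) \<le> C * Lp_norm p M f)"

definition Lp_functional :: "real \<Rightarrow> 'a measure \<Rightarrow> (('a \<Rightarrow> real) \<Rightarrow> real) \<Rightarrow> bool" where
  "Lp_functional p M \<phi> \<longleftrightarrow>
     (\<forall>f g. memLp p M f \<longrightarrow> memLp p M g \<longrightarrow> \<phi> (\<lambda>y. f y + g y) = \<phi> f + \<phi> g) \<and>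
     (\<forall>c f. memLp p M f \<longrightarrow> \<phi> (\<lambda>y. c * f y) = c * \<phi> f) \<and>
     (\<exists>C. \<forall>f. memLp p M f \<longrightarrow> \<bar>\<phi> f\<bar> \<le> C * Lp_norm p M f)"

definition dual_norm :: "real \<Rightarrow> 'a measure \<Rightarrow> (('a \<Rightarrow> real) \<Rightarrow> real) \<Rightarrow> real" where
  "dual_norm p M \<phi> = Sup {\<bar>\<phi> f\<bar> | f. memLp p M f \<and> Lp_norm p M f \<le> 1}"

definition nuclear_Lp :: "real \<Rightarrow> 'a measure \<Rightarrow> (('a \<Rightarrow> real) \<Rightarrow> ('a \<Rightarrow> real)) \<Rightarrow> bool" where
  "nuclear_Lp p M T \<longleftrightarrow> bounded_op_Lp p M T \<and>
     (\<exists>\<phi> :: nat \<Rightarrow> ('a \<Rightarrow> real) \<Rightarrow> real. \<exists>y :: nat \<Rightarrow> 'a \<Rightarrow> real.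
        (\<forall>n. Lp_functional p M (\<phi> n)) \<and> (\<forall>n. memLp p M (y n)) \<and>
        summable (\<lambda>n. dual_norm p M (\<phi> n) * Lp_norm p M (y n)) \<and>
        (\<forall>f. memLp p M f \<longrightarrow>
           (\<lambda>N. Lp_norm p M (\<lambda>x. T f x - (\<Sum>k<N. \<phi> k f * y k x))) \<longlonglongrightarrow> 0))"

definition WCE :: "'a measure \<Rightarrow> 'a measure \<Rightarrow> ('a \<Rightarrow> real) \<Rightarrow> ('a \<Rightarrow> real)
                   \<Rightarrow> ('a \<Rightarrow> real) \<Rightarrow> ('a \<Rightarrow> real)" where
  "WCE M F w u f = (\<lambda>x. w x * real_cond_exp M F (\<lambda>y. u y * f y) x)"

definition F_atom :: "'a measure \<Rightarrow> 'a measure \<Rightarrow> 'a set \<Rightarrow> bool" where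
  "F_atom M F A \<longleftrightarrow> A \<in> sets F \<and> emeasure M A > 0 \<and>
     (\<forall>B\<in>sets F. B \<subseteq> A \<longrightarrow> emeasure M B = 0 \<or> emeasure M B = emeasure M A)"

text \<open>Value of E(g) on an F-atom A (g \<ge> 0): (1/\<mu>(A)) \<integral>_A g d\<mu>.\<close>
definition cond_exp_atom :: "'a measure \<Rightarrow> ('a \<Rightarrow> real) \<Rightarrow> 'a set \<Rightarrow> real" where
  "cond_exp_atom M g A = enn2real (set_nn_integral M A (\<lambda>x. ennreal (g x)) / emeasure M A)"

end

(*
  On a purely atomic sub-sigma-algebra the conditional expectation is the average over each
  atom, so T = M_w E M_u is the sum over n of the rank-one operators
  f |-> (avg over A_n of u f) * w 1_{A_n}.  Boundedness of T forces every atom either to be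
  degenerate (u = 0 or w = 0 a.e. on it) or to carry integrable |w|^p and |u|^q, and then the
  n-th rank-one operator has norm a_n = (E|w|^p)^(1/p) (E|u|^q)^(1/q) (A_n) by Hoelder's
  inequality; so summability of (a_n) gives a nuclear representation.

  Conversely, let T = sum_k psi_k (x) z_k be any nuclear representation.  The extremal Hoelder
  functions g_n, h_n of u and w on A_n have norm at most one and satisfy
  integral h_n T g_n = a_n.  Since the g_n have disjoint supports,
  sum_n |psi_k(g_n)| |integral h_n z_k| <= ||psi_k|| ||z_k|| for every k, and summing over k
  gives sum_n a_n <= sum_k ||psi_k|| ||z_k|| < infinity.
*)

theory Submission
  imports Defs
begin

section \<open>Integrals, \<open>L\<^sup>p\<close> spaces and their duals\<close>

lemma conjugate_exponent:
  fixes p q :: real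
  assumes "1 < p" "1/p + 1/q = 1"
  shows "1 < q" "(q - 1) * p = q" "(p - 1) * q = p" "1/q = 1 - 1/p"
proof -
  show q: "1/q = 1 - 1/p" using assms(2) by simp
  moreover have "0 < 1 - 1/p" "1 - 1/p < 1" using assms(1) by (auto simp: field_simps)
  ultimately have "0 < 1/q" "1/q < 1" by simp_all
  then show "1 < q" by (simp add: divide_less_eq split: if_splits)
  then show "(q - 1) * p = q" "(p - 1) * q = p"
    using q assms(1) by (auto simp: field_simps)
qed

lemma Holder_inequality:
  fixes f g :: "'a \<Rightarrow> real"
  assumes pq: "1 < p" "1/p + 1/q = 1"
    and [measurable]: "f \<in> borel_measurable M" "g \<in> borel_measurable M"
    and fi: "integrable M (\<lambda>x. \<bar>f x\<bar> powr p)" and gi: "integrable M (\<lambda>x. \<bar>g x\<bar> powr q)"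
  shows "integrable M (\<lambda>x. f x * g x)"
    and "(\<integral>x. \<bar>f x * g x\<bar> \<partial>M) \<le> (\<integral>x. \<bar>f x\<bar> powr p \<partial>M) powr (1/p) * (\<integral>x. \<bar>g x\<bar> powr q \<partial>M) powr (1/q)"
proof -
  have q: "1 < q" using conjugate_exponent[OF pq] by simp
  have Young: "a * b \<le> a powr p / p + b powr q / q" if "0 \<le> a" "0 \<le> b" for a b :: real
    using Youngs_inequality[OF pq(1) q pq(2) that] .
  show int: "integrable M (\<lambda>x. f x * g x)"
  proof (rule Bochner_Integration.integrable_bound)
    show "integrable M (\<lambda>x. \<bar>f x\<bar> powr p / p + \<bar>g x\<bar> powr q / q)" using fi gi by auto
    have "norm (f x * g x) \<le> norm (\<bar>f x\<bar> powr p / p + \<bar>g x\<bar> powr q / q)" for x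
      using Young[of "\<bar>f x\<bar>" "\<bar>g x\<bar>"] by (simp add: abs_mult)
    then show "AE x in M. norm (f x * g x) \<le> norm (\<bar>f x\<bar> powr p / p + \<bar>g x\<bar> powr q / q)"
      by simp
  qed simp
  define F G where "F = (\<integral>x. \<bar>f x\<bar> powr p \<partial>M)" and "G = (\<integral>x. \<bar>g x\<bar> powr q \<partial>M)"
  show "(\<integral>x. \<bar>f x * g x\<bar> \<partial>M) \<le> F powr (1/p) * G powr (1/q)"
  proof (cases "F = 0 \<or> G = 0")
    case True
    then have "AE x in M. \<bar>f x\<bar> powr p = 0 \<or> \<bar>g x\<bar> powr q = 0"
      using integral_nonneg_eq_0_iff_AE[OF fi] integral_nonneg_eq_0_iff_AE[OF gi]
      unfolding F_def G_def by (auto elim: eventually_mono)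
    then have "AE x in M. \<bar>f x * g x\<bar> = 0" by eventually_elim auto
    then show ?thesis by (simp add: integral_eq_zero_AE)
  next
    case False
    then have "0 < F" "0 < G" unfolding F_def G_def by (simp_all add: order_le_neq_trans)
    define \<alpha> \<beta> where "\<alpha> = F powr (1/p)" and "\<beta> = G powr (1/q)"
    have \<alpha>\<beta>: "0 < \<alpha>" "0 < \<beta>" "\<alpha> powr p = F" "\<beta> powr q = G"
      unfolding \<alpha>_def \<beta>_def using \<open>0 < F\<close> \<open>0 < G\<close> pq q by (auto simp: powr_powr)
    have pointwise: "\<bar>f x * g x\<bar> / (\<alpha> * \<beta>) \<le> \<bar>f x\<bar> powr p / (p * F) + \<bar>g x\<bar> powr q / (q * G)" for x
      using Young[of "\<bar>f x\<bar> / \<alpha>" "\<bar>g x\<bar> / \<beta>"] \<alpha>\<beta>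
      by (simp add: abs_mult powr_divide mult.commute)
    have "(\<integral>x. \<bar>f x * g x\<bar> / (\<alpha> * \<beta>) \<partial>M) \<le> (\<integral>x. \<bar>f x\<bar> powr p / (p * F) + \<bar>g x\<bar> powr q / (q * G) \<partial>M)"
      by (rule integral_mono) (use int fi gi pointwise in auto)
    also have "\<dots> = 1" using fi gi \<open>0 < F\<close> \<open>0 < G\<close> pq by (simp add: F_def G_def)
    finally show ?thesis using \<alpha>\<beta> unfolding \<alpha>_def \<beta>_def by (simp add: divide_le_eq)
  qed
qed

lemma memLp_zero: "memLp p M (\<lambda>x. 0)"
  unfolding memLp_def by simp

lemma Lp_norm_zero: "Lp_norm p M (\<lambda>x. 0) = 0"
  unfolding Lp_norm_def by simp

lemma Lp_norm_nonneg: "0 \<le> Lp_norm p M f"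
  unfolding Lp_norm_def by simp

lemma memLp_borel_measurable: "memLp p M f \<Longrightarrow> f \<in> borel_measurable M"
  unfolding memLp_def by simp

lemma Lp_norm_cong_AE:
  assumes [measurable]: "f \<in> borel_measurable M" "g \<in> borel_measurable M"
    and "AE x in M. f x = g x"
  shows "Lp_norm p M f = Lp_norm p M g"
proof -
  have "(\<integral>x. \<bar>f x\<bar> powr p \<partial>M) = (\<integral>x. \<bar>g x\<bar> powr p \<partial>M)"
    by (rule integral_cong_AE) (use assms(3) in \<open>auto elim: eventually_mono\<close>)
  then show ?thesis unfolding Lp_norm_def by simp
qed

lemma memLp_cmult:
  assumes "memLp p M f"
  shows "memLp p M (\<lambda>x. c * f x)"
proof -
  have [measurable]: "f \<in> borel_measurable M" using assms by (simp add: memLp_def)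
  show ?thesis using assms unfolding memLp_def by (simp add: abs_mult powr_mult)
qed

lemma Lp_norm_cmult:
  assumes "0 < p"
  shows "Lp_norm p M (\<lambda>x. c * f x) = \<bar>c\<bar> * Lp_norm p M f"
proof -
  have "Lp_norm p M (\<lambda>x. c * f x) = (\<bar>c\<bar> powr p * (\<integral>x. \<bar>f x\<bar> powr p \<partial>M)) powr (1/p)"
    unfolding Lp_norm_def by (simp add: abs_mult powr_mult)
  also have "\<dots> = \<bar>c\<bar> * Lp_norm p M f"
    using assms by (simp add: Lp_norm_def powr_mult powr_powr)
  finally show ?thesis .
qed

lemma abs_add_powr_le:
  fixes a b p :: real
  assumes "0 < p"
  shows "\<bar>a + b\<bar> powr p \<le> 2 powr p * (\<bar>a\<bar> powr p + \<bar>b\<bar> powr p)"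
proof -
  have "\<bar>a + b\<bar> powr p \<le> (2 * max \<bar>a\<bar> \<bar>b\<bar>) powr p"
    by (rule powr_mono2) (use assms in auto)
  also have "\<dots> = 2 powr p * max \<bar>a\<bar> \<bar>b\<bar> powr p" by (simp add: powr_mult)
  also have "\<dots> \<le> 2 powr p * (\<bar>a\<bar> powr p + \<bar>b\<bar> powr p)"
    by (rule mult_left_mono) (auto simp: max_def)
  finally show ?thesis .
qed

lemma memLp_add:
  assumes "0 < p" "memLp p M f" "memLp p M g"
  shows "memLp p M (\<lambda>x. f x + g x)"
proof -
  have [measurable]: "f \<in> borel_measurable M" "g \<in> borel_measurable M"
    using assms by (simp_all add: memLp_def)
  have "integrable M (\<lambda>x. \<bar>f x + g x\<bar> powr p)"
  proof (rule Bochner_Integration.integrable_bound)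
    show "integrable M (\<lambda>x. 2 powr p * (\<bar>f x\<bar> powr p + \<bar>g x\<bar> powr p))"
      using assms by (simp add: memLp_def)
    show "AE x in M. norm (\<bar>f x + g x\<bar> powr p) \<le> norm (2 powr p * (\<bar>f x\<bar> powr p + \<bar>g x\<bar> powr p))"
      using abs_add_powr_le[OF assms(1)] by (intro AE_I2) (simp add: abs_le_iff order_trans)
  qed simp
  then show ?thesis by (simp add: memLp_def)
qed

lemma memLp_diff:
  "0 < p \<Longrightarrow> memLp p M f \<Longrightarrow> memLp p M g \<Longrightarrow> memLp p M (\<lambda>x. f x - g x)"
  using memLp_add[of p M f "\<lambda>x. -1 * g x"] memLp_cmult[of p M g "-1"] by simp

lemma memLp_sum:
  fixes N :: nat
  assumes "0 < p" "\<And>k. memLp p M (y k)"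
  shows "memLp p M (\<lambda>x. \<Sum>k<N. c k * y k x)"
proof (induction N)
  case (Suc N)
  then show ?case using memLp_add[OF assms(1) Suc memLp_cmult[OF assms(2)]] by simp
qed (simp add: memLp_zero)

lemma abs_integral_mult_le_Lp_norm:
  assumes pq: "1 < p" "1/p + 1/q = 1" and f: "memLp p M f"
    and [measurable]: "h \<in> borel_measurable M"
    and hi: "integrable M (\<lambda>x. \<bar>h x\<bar> powr q)" and h1: "(\<integral>x. \<bar>h x\<bar> powr q \<partial>M) \<le> 1"
  shows "integrable M (\<lambda>x. h x * f x)" and "\<bar>\<integral>x. h x * f x \<partial>M\<bar> \<le> Lp_norm p M f"
proof -
  have [measurable]: "f \<in> borel_measurable M" and fi: "integrable M (\<lambda>x. \<bar>f x\<bar> powr p)"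
    using f by (simp_all add: memLp_def)
  note H = Holder_inequality[OF pq \<open>f \<in> borel_measurable M\<close> \<open>h \<in> borel_measurable M\<close> fi hi]
  show "integrable M (\<lambda>x. h x * f x)" using H(1) by (simp add: mult.commute)
  have "(\<integral>x. \<bar>h x\<bar> powr q \<partial>M) powr (1/q) \<le> 1"
    using h1 pq(1) conjugate_exponent[OF pq] by (intro powr_le1) auto
  then have "(\<integral>x. \<bar>f x * h x\<bar> \<partial>M) \<le> Lp_norm p M f"
    using H(2) mult_left_le[OF _ Lp_norm_nonneg[of p M f]] unfolding Lp_norm_def
    by (meson order_trans)
  moreover have "\<bar>\<integral>x. h x * f x \<partial>M\<bar> \<le> (\<integral>x. \<bar>f x * h x\<bar> \<partial>M)"
    using integral_abs_bound by (simp add: mult.commute)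
  ultimately show "\<bar>\<integral>x. h x * f x \<partial>M\<bar> \<le> Lp_norm p M f" by linarith
qed

lemma Lp_norm_indicator_tail_tendsto_0:
  assumes "0 < p" "memLp p M f" and [measurable]: "\<And>n. A n \<in> sets M"
    and cover: "(\<Union>n. A n) = space M"
  shows "(\<lambda>N. Lp_norm p M (\<lambda>x. f x * indicator (space M - (\<Union>m<N. A m)) x)) \<longlonglongrightarrow> 0"
proof -
  have [measurable]: "f \<in> borel_measurable M" and fi: "integrable M (\<lambda>x. \<bar>f x\<bar> powr p)"
    using assms(2) by (simp_all add: memLp_def)
  define B where "B N = space M - (\<Union>m<N. A m)" for N
  have [measurable]: "B N \<in> sets M" for N unfolding B_def by measurable
  have "(\<lambda>N. \<integral>x. \<bar>f x * indicator (B N) x\<bar> powr p \<partial>M) \<longlonglongrightarrow> (\<integral>x. 0 \<partial>M)"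
  proof (rule integral_dominated_convergence[where w="\<lambda>x. \<bar>f x\<bar> powr p"])
    show "AE x in M. (\<lambda>N. \<bar>f x * indicator (B N) x\<bar> powr p) \<longlonglongrightarrow> 0"
    proof (rule AE_I2)
      fix x assume "x \<in> space M"
      then obtain m where "x \<in> A m" using cover by auto
      then have "\<forall>N\<ge>Suc m. x \<notin> B N" by (auto simp: B_def Suc_le_eq)
      then have "\<forall>N\<ge>Suc m. \<bar>f x * indicator (B N) x\<bar> powr p = 0" by simp
      then show "(\<lambda>N. \<bar>f x * indicator (B N) x\<bar> powr p) \<longlonglongrightarrow> 0"
        by (intro tendsto_eventually) (auto simp: eventually_sequentially)
    qed
  qed (use fi in \<open>auto intro!: AE_I2 simp: indicator_def\<close>)
  then have "(\<lambda>N. \<integral>x. \<bar>f x * indicator (B N) x\<bar> powr p \<partial>M) \<longlonglongrightarrow> 0" by simp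
  then have "(\<lambda>N. (\<integral>x. \<bar>f x * indicator (B N) x\<bar> powr p \<partial>M) powr (1/p)) \<longlonglongrightarrow> 0"
    by (rule tendsto_zero_powrI[OF _ tendsto_const]) (use assms(1) in auto)
  then show ?thesis unfolding Lp_norm_def B_def .
qed

lemma
  assumes "Lp_functional p M \<phi>" "0 < p"
  shows dual_norm_nonneg: "0 \<le> dual_norm p M \<phi>"
    and abs_le_dual_norm: "memLp p M f \<Longrightarrow> \<bar>\<phi> f\<bar> \<le> dual_norm p M \<phi> * Lp_norm p M f"
proof -
  obtain C where C: "\<And>f. memLp p M f \<Longrightarrow> \<bar>\<phi> f\<bar> \<le> C * Lp_norm p M f"
    using assms(1) unfolding Lp_functional_def by blast
  define S where "S = {\<bar>\<phi> f\<bar> | f. memLp p M f \<and> Lp_norm p M f \<le> 1}"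
  have bdd: "bdd_above S"
  proof (rule bdd_aboveI)
    fix z assume "z \<in> S"
    then obtain f where f: "z = \<bar>\<phi> f\<bar>" "memLp p M f" "Lp_norm p M f \<le> 1" unfolding S_def by auto
    have "z \<le> max C 0 * Lp_norm p M f"
      using C[OF f(2)] f(1) Lp_norm_nonneg[of p M f] by (smt (verit) mult_right_mono)
    also have "\<dots> \<le> max C 0" using f(3) by (simp add: mult_left_le)
    finally show "z \<le> max C 0" .
  qed
  have "\<phi> (\<lambda>x. 0) = 0" using C[OF memLp_zero] by (simp add: Lp_norm_zero)
  then have "0 \<in> S"
    unfolding S_def by (auto intro!: exI[of _ "\<lambda>x. 0"] simp: memLp_zero Lp_norm_zero)
  then show "0 \<le> dual_norm p M \<phi>" unfolding dual_norm_def S_def[symmetric] using bdd by (rule cSup_upper)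
  assume f: "memLp p M f"
  show "\<bar>\<phi> f\<bar> \<le> dual_norm p M \<phi> * Lp_norm p M f"
  proof (cases "Lp_norm p M f = 0")
    case True
    then show ?thesis using C[OF f] by simp
  next
    case False
    define r where "r = Lp_norm p M f"
    have r: "0 < r" using False Lp_norm_nonneg[of p M f] unfolding r_def by auto
    have "\<phi> (\<lambda>x. (1/r) * f x) = (1/r) * \<phi> f"
      using assms(1) f unfolding Lp_functional_def by blast
    moreover have "Lp_norm p M (\<lambda>x. (1/r) * f x) = 1"
      using Lp_norm_cmult[OF assms(2), of M "1/r" f] r unfolding r_def by simp
    ultimately have "\<bar>\<phi> f\<bar> / r \<in> S"
      using memLp_cmult[OF f] r unfolding S_def by (auto intro!: exI[of _ "\<lambda>x. (1/r) * f x"] simp: abs_mult)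
    then have "\<bar>\<phi> f\<bar> / r \<le> dual_norm p M \<phi>" unfolding dual_norm_def S_def[symmetric] using bdd by (rule cSup_upper)
    then show ?thesis using r unfolding r_def by (simp add: divide_le_eq mult.commute)
  qed
qed

lemma dual_norm_le:
  assumes "0 \<le> B" "\<And>f. memLp p M f \<Longrightarrow> \<bar>\<phi> f\<bar> \<le> B * Lp_norm p M f"
  shows "dual_norm p M \<phi> \<le> B"
  unfolding dual_norm_def
proof (rule cSup_least)
  show "{\<bar>\<phi> f\<bar> |f. memLp p M f \<and> Lp_norm p M f \<le> 1} \<noteq> {}"
    by (auto intro!: exI[of _ "\<lambda>x. 0"] simp: memLp_zero Lp_norm_zero)
  fix z assume "z \<in> {\<bar>\<phi> f\<bar> |f. memLp p M f \<and> Lp_norm p M f \<le> 1}"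
  then obtain f where f: "z = \<bar>\<phi> f\<bar>" "memLp p M f" "Lp_norm p M f \<le> 1" by auto
  then show "z \<le> B" using assms(2)[OF f(2)] mult_left_le[OF f(3) assms(1)] by linarith
qed

lemma Lp_functional_sum:
  fixes N :: nat
  assumes "Lp_functional p M \<phi>" "0 < p" "\<And>n. memLp p M (z n)"
  shows "\<phi> (\<lambda>x. \<Sum>n<N. c n * z n x) = (\<Sum>n<N. c n * \<phi> (z n))"
proof (induction N)
  case 0
  have "\<phi> (\<lambda>x. 0 * 0) = 0 * \<phi> (\<lambda>x. 0)"
    using assms(1) memLp_zero unfolding Lp_functional_def by blast
  then show ?case by simp
next
  case (Suc N)
  have "\<phi> (\<lambda>x. (\<Sum>n<N. c n * z n x) + c N * z N x) = \<phi> (\<lambda>x. \<Sum>n<N. c n * z n x) + \<phi> (\<lambda>x. c N * z N x)"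
    using assms memLp_sum memLp_cmult unfolding Lp_functional_def by blast
  moreover have "\<phi> (\<lambda>x. c N * z N x) = c N * \<phi> (z N)"
    using assms unfolding Lp_functional_def by blast
  ultimately show ?case using Suc by simp
qed

definition dual_pow :: "real \<Rightarrow> real \<Rightarrow> real" where
  "dual_pow r v = sgn v * \<bar>v\<bar> powr (r - 1)"

lemma borel_measurable_dual_pow [measurable]:
  assumes [measurable]: "f \<in> borel_measurable M"
  shows "(\<lambda>x. dual_pow r (f x)) \<in> borel_measurable M"
  unfolding dual_pow_def by measurable

lemma mult_dual_pow: "v * dual_pow r v = \<bar>v\<bar> powr r"
proof (cases "v = 0")
  case False
  have "v * sgn v = \<bar>v\<bar>" by (simp add: sgn_if)
  then have "v * dual_pow r v = \<bar>v\<bar> * \<bar>v\<bar> powr (r - 1)"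
    unfolding dual_pow_def by (simp add: mult.assoc[symmetric])
  then show ?thesis using False by (simp add: powr_mult_base)
qed (simp add: dual_pow_def)

lemma abs_dual_pow_powr:
  assumes "(r - 1) * s = r"
  shows "\<bar>dual_pow r v\<bar> powr s = \<bar>v\<bar> powr r"
  using assms by (cases "v = 0") (auto simp: dual_pow_def abs_mult powr_powr)

lemma sum_lessThan_eq_single:
  fixes z :: "nat \<Rightarrow> 'b::comm_monoid_add"
  assumes "\<And>k. k \<noteq> m \<Longrightarrow> z k = 0"
  shows "(\<Sum>k<N. z k) = (if m < N then z m else 0)"
  using assms by (auto intro: sum.neutral simp: sum.remove[of "{..<N}" m])

lemma enn2real_divide_ennreal:
  assumes "0 < c"
  shows "enn2real (X / ennreal c) = enn2real X / c"
  using assms by (cases X) (simp_all add: divide_ennreal ennreal_top_divide)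

lemma enn2real_set_nn_integral_eq_integral:
  assumes [measurable]: "g \<in> borel_measurable M" "S \<in> sets M" and "\<And>x. 0 \<le> g x"
  shows "enn2real (set_nn_integral M S (\<lambda>x. ennreal (g x))) = (\<integral>x. g x * indicator S x \<partial>M)"
proof -
  have "set_nn_integral M S (\<lambda>x. ennreal (g x)) = (\<integral>\<^sup>+x. ennreal (g x * indicator S x) \<partial>M)"
    by (rule nn_integral_cong) (auto simp: indicator_def)
  then show ?thesis using assms(3) by (simp add: integral_eq_nn_integral)
qed

lemma integrable_of_bounded_truncations:
  fixes g :: "'a \<Rightarrow> real"
  assumes [measurable]: "g \<in> borel_measurable M" "S \<in> sets M" and nonneg: "\<And>x. 0 \<le> g x"
    and int: "\<And>k::nat. integrable M (\<lambda>x. g x * indicator {x \<in> S. g x \<le> k} x)"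
    and bound: "\<And>k::nat. (\<integral>x. g x * indicator {x \<in> S. g x \<le> k} x \<partial>M) \<le> B"
  shows "integrable M (\<lambda>x. g x * indicator S x)"
proof -
  define f where "f k x = g x * indicator {x \<in> S. g x \<le> real k} x" for k :: nat and x
  have mono: "mono (\<lambda>k. f k x)" for x
    using nonneg[of x] by (intro monoI) (auto simp: f_def indicator_def)
  have lim: "(\<lambda>k. f k x) \<longlonglongrightarrow> g x * indicator S x" for x
  proof (rule tendsto_eventually)
    have "f k x = g x * indicator S x" if "nat \<lceil>g x\<rceil> \<le> k" for k
    proof -
      have "g x \<le> real k" using that by (meson order_trans real_nat_ceiling_ge of_nat_le_iff)
      then show ?thesis by (simp add: f_def indicator_def)
    qed
    then show "\<forall>\<^sub>F k in sequentially. f k x = g x * indicator S x"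
      unfolding eventually_sequentially by blast
  qed
  have "incseq (\<lambda>k. integral\<^sup>L M (f k))"
    using mono int unfolding f_def by (intro monoI integral_mono) (auto simp: mono_def le_fun_def)
  moreover have "bdd_above (range (\<lambda>k. integral\<^sup>L M (f k)))"
    using bound unfolding f_def by (intro bdd_aboveI[of _ B]) auto
  ultimately have ilim: "(\<lambda>k. integral\<^sup>L M (f k)) \<longlonglongrightarrow> (SUP k. integral\<^sup>L M (f k))"
    by (rule LIMSEQ_incseq_SUP[rotated])
  have "integrable M (f k)" for k using int[of k] by (simp add: f_def[abs_def])
  then show ?thesis
    by (rule integrable_monotone_convergence[OF _ _ _ ilim]) (use mono lim in auto)
qed

section \<open>Atomic sub-\<open>\<sigma>\<close>-algebras\<close>

locale atomic_partition = sigma_finite_subalgebra M F for M F :: "'a measure" +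
  fixes A :: "nat \<Rightarrow> 'a set"
  assumes atom: "\<And>n. F_atom M F (A n)"
    and disjoint: "disjoint_family A"
    and cover: "(\<Union>n. A n) = space M"
begin

lemma sets_F_subset: "sets F \<subseteq> sets M"
  using subalg by (simp add: subalgebra_def)

lemma atom_sets_F [measurable]: "A n \<in> sets F"
  using atom by (simp add: F_atom_def)

lemma atom_sets [measurable]: "A n \<in> sets M"
  using atom_sets_F sets_F_subset by blast

lemma emeasure_atom_pos: "0 < emeasure M (A n)"
  using atom by (simp add: F_atom_def)

lemma atom_eq_or_null:
  assumes "B \<in> sets F" "B \<subseteq> A n"
  shows "emeasure M B = 0 \<or> emeasure M B = emeasure M (A n)"
  using atom[of n] assms by (simp add: F_atom_def)

text \<open>By \<open>\<sigma>\<close>-finiteness on F, an atom meets some F-set of finite measure in a non-null,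
  hence full, part.\<close>
lemma emeasure_atom_finite: "emeasure M (A n) < \<infinity>"
proof -
  interpret MF: sigma_finite_measure "restr_to_subalg M F" by (rule sigma_fin_subalg)
  obtain Q :: "nat \<Rightarrow> 'a set" where Q: "range Q \<subseteq> sets (restr_to_subalg M F)"
    "(\<Union>i. Q i) = space (restr_to_subalg M F)" "\<And>i. emeasure (restr_to_subalg M F) (Q i) \<noteq> \<infinity>"
    using MF.sigma_finite by metis
  have QF: "Q i \<in> sets F" for i using Q(1) sets_restr_to_subalg[OF subalg] by auto
  have Q_fin: "emeasure M (Q i) \<noteq> \<infinity>" for i
    using Q(3)[of i] emeasure_restr_to_subalg[OF subalg QF] by simp
  have "\<exists>i. emeasure M (A n \<inter> Q i) \<noteq> 0"
  proof (rule ccontr)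
    assume "\<nexists>i. emeasure M (A n \<inter> Q i) \<noteq> 0"
    then have "A n \<inter> Q i \<in> null_sets M" for i
      using QF sets_F_subset by (auto intro!: null_setsI)
    then have "(\<Union>i. A n \<inter> Q i) \<in> null_sets M" by blast
    moreover have "(\<Union>i. A n \<inter> Q i) = A n"
      using Q(2) sets.sets_into_space[OF atom_sets[of n]] by (auto simp: space_restr_to_subalg)
    ultimately show False using emeasure_atom_pos[of n] by auto
  qed
  then obtain i where i: "emeasure M (A n \<inter> Q i) \<noteq> 0" by blast
  then have "emeasure M (A n) = emeasure M (A n \<inter> Q i)"
    using atom_eq_or_null[of "A n \<inter> Q i" n] QF by auto
  also have "\<dots> \<le> emeasure M (Q i)"
    using QF sets_F_subset by (intro emeasure_mono) auto
  finally show ?thesis using Q_fin[of i] by (simp add: less_top order.strict_trans1)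
qed

lemma emeasure_atom_eq: "emeasure M (A n) = ennreal (measure M (A n))"
  using emeasure_atom_finite[of n] by (intro emeasure_eq_ennreal_measure) simp

lemma measure_atom_pos: "0 < measure M (A n)"
  using emeasure_atom_pos emeasure_atom_eq by (metis ennreal_less_zero_iff)

lemma atom_unique: "x \<in> A n \<Longrightarrow> x \<in> A m \<Longrightarrow> n = m"
  using disjoint by (auto simp: disjoint_family_on_def)

lemma atom_exists: "x \<in> space M \<Longrightarrow> \<exists>n. x \<in> A n"
  using cover by auto

lemma sum_vanishing_off_atoms:
  fixes z :: "nat \<Rightarrow> 'a \<Rightarrow> 'b::comm_monoid_add"
  assumes "x \<in> A m" and "\<And>k y. y \<notin> A k \<Longrightarrow> z k y = 0"
  shows "(\<Sum>k<N. z k x) = (if m < N then z m x else 0)"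
  by (rule sum_lessThan_eq_single) (use assms atom_unique in blast)

lemma atom_dichotomy:
  assumes "B \<in> sets F"
  shows "B \<inter> A n \<in> null_sets M \<or> A n - B \<in> null_sets M"
proof -
  have BF: "B \<inter> A n \<in> sets F" and BM: "B \<inter> A n \<in> sets M"
    using assms sets_F_subset by auto
  consider "emeasure M (B \<inter> A n) = 0" | "emeasure M (B \<inter> A n) = emeasure M (A n)"
    using atom_eq_or_null[OF BF] by blast
  then show ?thesis
  proof cases
    case 1
    then have "B \<inter> A n \<in> null_sets M" using BM by (rule null_setsI)
    then show ?thesis ..
  next
    case 2
    have "emeasure M (B \<inter> A n) \<noteq> \<infinity>"
      using 2 emeasure_atom_finite[of n] by simp
    then have "emeasure M (A n - B \<inter> A n) = emeasure M (A n) - emeasure M (B \<inter> A n)"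
      using BM by (intro emeasure_Diff) auto
    moreover have "A n - B \<inter> A n = A n - B" by blast
    ultimately have "emeasure M (A n - B) = 0"
      using 2 emeasure_atom_finite[of n] by (simp add: less_top)
    then have "A n - B \<in> null_sets M" using assms sets_F_subset by (intro null_setsI) auto
    then show ?thesis ..
  qed
qed

lemma set_nn_integral_sum_atoms:
  assumes [measurable]: "B \<in> sets M" "h \<in> borel_measurable M"
  shows "(\<integral>\<^sup>+x\<in>B. h x \<partial>M) = (\<Sum>m. \<integral>\<^sup>+x. h x * indicator (B \<inter> A m) x \<partial>M)"
proof -
  have "(\<integral>\<^sup>+x\<in>B. h x \<partial>M) = (\<integral>\<^sup>+x. (\<Sum>m. h x * indicator (B \<inter> A m) x) \<partial>M)"
  proof (rule nn_integral_cong)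
    fix x assume x: "x \<in> space M"
    have "(\<Sum>m. indicator (B \<inter> A m) x :: ennreal) = indicator (\<Union>m. B \<inter> A m) x"
      by (rule suminf_indicator) (use disjoint in \<open>auto simp: disjoint_family_on_def\<close>)
    also have "(\<Union>m. B \<inter> A m) = B \<inter> space M" using cover by auto
    finally show "h x * indicator B x = (\<Sum>m. h x * indicator (B \<inter> A m) x)"
      using x by (simp add: indicator_def)
  qed
  also have "\<dots> = (\<Sum>m. \<integral>\<^sup>+x. h x * indicator (B \<inter> A m) x \<partial>M)"
    by (rule nn_integral_suminf) measurable
  finally show ?thesis .
qed

text \<open>This holds because an F-set meets each atom in a null set or in almost all of it.\<close>
lemma nn_integral_inter_atom_eq_average:
  assumes B: "B \<in> sets F" and [measurable]: "f \<in> borel_measurable M"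
  shows "(\<integral>\<^sup>+x. f x * indicator (B \<inter> A m) x \<partial>M)
    = (\<integral>\<^sup>+x. set_nn_integral M (A m) f / emeasure M (A m) * indicator (B \<inter> A m) x \<partial>M)"
  using atom_dichotomy[OF B, of m]
proof
  assume "B \<inter> A m \<in> null_sets M"
  then show ?thesis by (simp add: nn_integral_null_set)
next
  assume "A m - B \<in> null_sets M"
  from AE_not_in[OF this]
  have ae: "AE x in M. indicator (B \<inter> A m) x = (indicator (A m) x :: ennreal)"
    by eventually_elim (auto simp: indicator_def)
  have "(\<integral>\<^sup>+x. f x * indicator (B \<inter> A m) x \<partial>M) = (\<integral>\<^sup>+x. f x * indicator (A m) x \<partial>M)"
    by (rule nn_integral_cong_AE) (use ae in auto)
  also have "\<dots> = set_nn_integral M (A m) f / emeasure M (A m) * emeasure M (A m)"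
    using emeasure_atom_pos[of m] emeasure_atom_finite[of m]
    by (simp add: ennreal_divide_times ennreal_times_divide mult.commute[of "emeasure M (A m)"] ennreal_mult_divide_eq)
  also have "\<dots> = (\<integral>\<^sup>+x. set_nn_integral M (A m) f / emeasure M (A m) * indicator (A m) x \<partial>M)"
    by (simp add: nn_integral_cmult_indicator)
  also have "\<dots> = (\<integral>\<^sup>+x. set_nn_integral M (A m) f / emeasure M (A m) * indicator (B \<inter> A m) x \<partial>M)"
    by (rule nn_integral_cong_AE) (use ae in auto)
  finally show ?thesis .
qed

lemma nn_cond_exp_on_atoms:
  assumes [measurable]: "f \<in> borel_measurable M"
  shows "AE x in M. \<forall>n. x \<in> A n \<longrightarrow> nn_cond_exp M F f x = set_nn_integral M (A n) f / emeasure M (A n)"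
proof -
  define c where "c m = set_nn_integral M (A m) f / emeasure M (A m)" for m
  define G where "G x = (\<Sum>m. c m * indicator (A m) x)" for x
  have GF: "G \<in> borel_measurable F" unfolding G_def by measurable
  have [measurable]: "G \<in> borel_measurable M" using GF measurable_from_subalg[OF subalg] by blast
  have G_atom: "G x = c n" if "x \<in> A n" for x n
  proof -
    have "G x = (\<Sum>m\<in>{n}. c m * indicator (A m) x)" unfolding G_def
      by (rule suminf_finite) (use that atom_unique in \<open>auto simp: indicator_def\<close>)
    then show ?thesis using that by simp
  qed
  have "AE x in M. G x = nn_cond_exp M F f x"
  proof (rule nn_cond_exp_charact)
    fix B assume B: "B \<in> sets F"
    then have BM: "B \<in> sets M" using sets_F_subset by auto
    have "(\<integral>\<^sup>+x\<in>B. f x \<partial>M) = (\<Sum>m. \<integral>\<^sup>+x. f x * indicator (B \<inter> A m) x \<partial>M)"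
      by (rule set_nn_integral_sum_atoms[OF BM assms])
    also have "\<dots> = (\<Sum>m. \<integral>\<^sup>+x. c m * indicator (B \<inter> A m) x \<partial>M)"
      unfolding c_def nn_integral_inter_atom_eq_average[OF B assms] ..
    also have "\<dots> = (\<Sum>m. \<integral>\<^sup>+x. G x * indicator (B \<inter> A m) x \<partial>M)"
      by (intro suminf_cong nn_integral_cong) (auto simp: G_atom indicator_def)
    also have "\<dots> = (\<integral>\<^sup>+x\<in>B. G x \<partial>M)"
      by (rule set_nn_integral_sum_atoms[OF BM, symmetric]) measurable
    finally show "(\<integral>\<^sup>+x\<in>B. f x \<partial>M) = (\<integral>\<^sup>+x\<in>B. G x \<partial>M)" .
  qed (use GF in auto)
  then show ?thesis by eventually_elim (auto simp: G_atom c_def)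
qed

lemma real_cond_exp_on_atom:
  assumes [measurable]: "g \<in> borel_measurable M"
    and int: "integrable M (\<lambda>x. g x * indicator (A n) x)"
  shows "AE x in M. x \<in> A n \<longrightarrow>
    real_cond_exp M F g x = (\<integral>x. g x * indicator (A n) x \<partial>M) / measure M (A n)"
proof -
  have avg: "enn2real (set_nn_integral M (A n) (\<lambda>x. ennreal (h x)) / emeasure M (A n))
      = enn2real (\<integral>\<^sup>+x. ennreal (h x * indicator (A n) x) \<partial>M) / measure M (A n)" for h
    unfolding emeasure_atom_eq enn2real_divide_ennreal[OF measure_atom_pos]
    by (auto intro!: arg_cong[where f=enn2real] nn_integral_cong simp: indicator_def)
  have "(\<integral>x. g x * indicator (A n) x \<partial>M)
      = enn2real (\<integral>\<^sup>+x. ennreal (g x * indicator (A n) x) \<partial>M)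
        - enn2real (\<integral>\<^sup>+x. ennreal (- g x * indicator (A n) x) \<partial>M)"
    using real_lebesgue_integral_def[OF int] by simp
  then have avg_eq: "(\<integral>x. g x * indicator (A n) x \<partial>M) / measure M (A n)
      = enn2real (set_nn_integral M (A n) (\<lambda>x. ennreal (g x)) / emeasure M (A n))
        - enn2real (set_nn_integral M (A n) (\<lambda>x. ennreal (- g x)) / emeasure M (A n))"
    unfolding avg by (simp add: diff_divide_distrib)
  have "AE x in M. \<forall>n. x \<in> A n \<longrightarrow> nn_cond_exp M F (\<lambda>x. ennreal (g x)) x
      = set_nn_integral M (A n) (\<lambda>x. ennreal (g x)) / emeasure M (A n)"
    "AE x in M. \<forall>n. x \<in> A n \<longrightarrow> nn_cond_exp M F (\<lambda>x. ennreal (- g x)) x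
      = set_nn_integral M (A n) (\<lambda>x. ennreal (- g x)) / emeasure M (A n)"
    by (intro nn_cond_exp_on_atoms; measurable)+
  then show ?thesis
    unfolding real_cond_exp_def avg_eq by eventually_elim auto
qed

lemma cond_exp_atom_eq_integral:
  assumes "g \<in> borel_measurable M" "\<And>x. 0 \<le> g x"
  shows "cond_exp_atom M g (A n) = (\<integral>x. g x * indicator (A n) x \<partial>M) / measure M (A n)"
  unfolding cond_exp_atom_def emeasure_atom_eq enn2real_divide_ennreal[OF measure_atom_pos]
  using enn2real_set_nn_integral_eq_integral[OF assms(1) atom_sets assms(2)] by simp

lemma integrable_const_indicator_atom: "integrable M (\<lambda>x. c * indicator (A n) x :: real)"
proof -
  have "integrable M (indicator (A n) :: 'a \<Rightarrow> real)"
    using emeasure_atom_finite[of n] sets.sets_into_space[OF atom_sets[of n]]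
    by (simp add: integrable_indicator_iff Int_absorb2)
  then show ?thesis by simp
qed

lemma sum_integral_atoms_le:
  fixes f :: "'a \<Rightarrow> real"
  assumes "integrable M f" "\<And>x. 0 \<le> f x"
  shows "(\<Sum>n<N. \<integral>x. f x * indicator (A n) x \<partial>M) \<le> (\<integral>x. f x \<partial>M)"
proof -
  have int: "integrable M (\<lambda>x. f x * indicator (A n) x)" for n
    using assms(1) by (rule integrable_real_mult_indicator[OF atom_sets])
  have "(\<Sum>n<N. \<integral>x. f x * indicator (A n) x \<partial>M) = (\<integral>x. (\<Sum>n<N. f x * indicator (A n) x) \<partial>M)"
    by (rule Bochner_Integration.integral_sum[symmetric]) (use int in auto)
  also have "\<dots> \<le> (\<integral>x. f x \<partial>M)"
  proof (rule integral_mono)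
    fix x assume "x \<in> space M"
    then obtain m where m: "x \<in> A m" using atom_exists by blast
    have "(\<Sum>n<N. f x * indicator (A n) x) = (if m < N then f x * indicator (A m) x else 0)"
      using m by (rule sum_vanishing_off_atoms) simp
    also have "\<dots> \<le> f x" using assms(2)[of x] m by simp
    finally show "(\<Sum>n<N. f x * indicator (A n) x) \<le> f x" .
  next
    show "integrable M (\<lambda>x. \<Sum>n<N. f x * indicator (A n) x)"
      by (rule Bochner_Integration.integrable_sum) (use int in auto)
  qed (rule assms(1))
  finally show ?thesis .
qed

end

section \<open>The weighted conditional expectation operator on atoms\<close>

locale wce_on_atoms = atomic_partition M F A for M F :: "'a measure" and A +
  fixes p q :: real and w u :: "'a \<Rightarrow> real"
  assumes p_gt_1: "1 < p" and conjugate: "1/p + 1/q = 1"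
    and w_measurable [measurable]: "w \<in> borel_measurable M"
    and u_measurable [measurable]: "u \<in> borel_measurable M"
    and bounded: "bounded_op_Lp p M (WCE M F w u)"
begin

abbreviation T :: "('a \<Rightarrow> real) \<Rightarrow> 'a \<Rightarrow> real" where
  "T \<equiv> WCE M F w u"

lemma p_pos: "0 < p"
  using p_gt_1 by simp

lemmas q_gt_1 = conjugate_exponent(1)[OF p_gt_1 conjugate]
   and q_dual = conjugate_exponent(2)[OF p_gt_1 conjugate]
   and p_dual = conjugate_exponent(3)[OF p_gt_1 conjugate]
   and inverse_q = conjugate_exponent(4)[OF p_gt_1 conjugate]

lemma memLp_T: "memLp p M f \<Longrightarrow> memLp p M (T f)"
  using bounded by (simp add: bounded_op_Lp_def)

lemma T_measurable: "memLp p M f \<Longrightarrow> T f \<in> borel_measurable M"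
  using memLp_T memLp_borel_measurable by blast

text \<open>As Bochner integrals, \<open>w_int n\<close> and \<open>u_int n\<close> are \<open>0\<close> when the integrand is not
  integrable, just as \<^const>\<open>cond_exp_atom\<close> is \<open>0\<close> on an infinite integral.\<close>
definition w_int :: "nat \<Rightarrow> real" where
  "w_int n = (\<integral>x. \<bar>w x\<bar> powr p * indicator (A n) x \<partial>M)"

definition u_int :: "nat \<Rightarrow> real" where
  "u_int n = (\<integral>x. \<bar>u x\<bar> powr q * indicator (A n) x \<partial>M)"

definition regular_atom :: "nat \<Rightarrow> bool" where
  "regular_atom n \<longleftrightarrow> integrable M (\<lambda>x. \<bar>w x\<bar> powr p * indicator (A n) x)
      \<and> integrable M (\<lambda>x. \<bar>u x\<bar> powr q * indicator (A n) x)"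

definition atom_coeff :: "nat \<Rightarrow> real" where
  "atom_coeff n = w_int n powr (1/p) * u_int n powr (1/q) / measure M (A n)"

lemma w_int_nonneg: "0 \<le> w_int n" and u_int_nonneg: "0 \<le> u_int n"
  unfolding w_int_def u_int_def by simp_all

lemma atom_coeff_nonneg: "0 \<le> atom_coeff n"
  unfolding atom_coeff_def using measure_atom_pos[of n] by simp

lemma cond_exp_atom_product_eq_atom_coeff:
  "cond_exp_atom M (\<lambda>x. \<bar>w x\<bar> powr p) (A n) powr (1/p)
     * cond_exp_atom M (\<lambda>x. \<bar>u x\<bar> powr q) (A n) powr (1/q) = atom_coeff n"
proof -
  define \<mu> where "\<mu> = measure M (A n)"
  have \<mu>: "0 < \<mu>" unfolding \<mu>_def by (rule measure_atom_pos)
  have "(w_int n / \<mu>) powr (1/p) * (u_int n / \<mu>) powr (1/q)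
      = w_int n powr (1/p) * u_int n powr (1/q) / (\<mu> powr (1/p) * \<mu> powr (1/q))"
    using \<mu> w_int_nonneg[of n] u_int_nonneg[of n] by (simp add: powr_divide)
  also have "\<mu> powr (1/p) * \<mu> powr (1/q) = \<mu>"
    using \<mu> conjugate by (simp add: powr_add[symmetric])
  finally show ?thesis
    unfolding atom_coeff_def \<mu>_def w_int_def u_int_def
    by (subst (1 2) cond_exp_atom_eq_integral) auto
qed

lemma WCE_on_atom:
  assumes f: "memLp p M f" and int: "integrable M (\<lambda>x. u x * f x * indicator (A n) x)"
  shows "AE x in M. x \<in> A n \<longrightarrow>
    T f x = w x * ((\<integral>x. u x * f x * indicator (A n) x \<partial>M) / measure M (A n))"
proof -
  have [measurable]: "f \<in> borel_measurable M" using f by (rule memLp_borel_measurable)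
  have "AE x in M. x \<in> A n \<longrightarrow> real_cond_exp M F (\<lambda>x. u x * f x) x
      = (\<integral>x. u x * f x * indicator (A n) x \<partial>M) / measure M (A n)"
    by (rule real_cond_exp_on_atom[OF _ int]) measurable
  then show ?thesis unfolding WCE_def by eventually_elim simp
qed

text \<open>The extremal functions of Hoelder's inequality for \<open>u\<close>, truncated to \<open>S\<close>.\<close>
lemma WCE_dual_test:
  fixes c :: real
  assumes [measurable]: "S \<in> sets M" and S: "S \<subseteq> A n"
    and int: "integrable M (\<lambda>x. \<bar>u x\<bar> powr q * indicator S x)"
  defines "f \<equiv> \<lambda>x. c * dual_pow q (u x) * indicator S x"
  shows "memLp p M f"
    and "(\<integral>x. \<bar>f x\<bar> powr p \<partial>M) = \<bar>c\<bar> powr p * (\<integral>x. \<bar>u x\<bar> powr q * indicator S x \<partial>M)"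
    and "AE x in M. x \<in> A n \<longrightarrow>
      T f x = w x * (c * (\<integral>x. \<bar>u x\<bar> powr q * indicator S x \<partial>M) / measure M (A n))"
proof -
  have [measurable]: "f \<in> borel_measurable M" unfolding f_def by measurable
  have f_powr: "\<bar>f x\<bar> powr p = \<bar>c\<bar> powr p * (\<bar>u x\<bar> powr q * indicator S x)" for x
    unfolding f_def using abs_dual_pow_powr[OF q_dual, of "u x"] p_pos
    by (cases "x \<in> S") (simp_all add: abs_mult powr_mult)
  have u_f: "u x * f x * indicator (A n) x = c * (\<bar>u x\<bar> powr q * indicator S x)" for x
    unfolding f_def using S mult_dual_pow[of "u x" q]
    by (cases "x \<in> S") (auto simp: indicator_def algebra_simps)
  show f: "memLp p M f" unfolding memLp_def f_powr using int by simp
  show "(\<integral>x. \<bar>f x\<bar> powr p \<partial>M) = \<bar>c\<bar> powr p * (\<integral>x. \<bar>u x\<bar> powr q * indicator S x \<partial>M)"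
    unfolding f_powr by simp
  show "AE x in M. x \<in> A n \<longrightarrow>
      T f x = w x * (c * (\<integral>x. \<bar>u x\<bar> powr q * indicator S x \<partial>M) / measure M (A n))"
    using WCE_on_atom[OF f, of n] int by (simp add: u_f)
qed

lemma abs_WCE_dual_test_powr:
  assumes [measurable]: "S \<in> sets M" and "S \<subseteq> A n"
    and int: "integrable M (\<lambda>x. \<bar>u x\<bar> powr q * indicator S x)"
  defines "f \<equiv> \<lambda>x. 1 * dual_pow q (u x) * indicator S x"
    and "I \<equiv> \<integral>x. \<bar>u x\<bar> powr q * indicator S x \<partial>M"
  shows "AE x in M. \<bar>T f x\<bar> powr p * indicator (A n) x
    = (I / measure M (A n)) powr p * (\<bar>w x\<bar> powr p * indicator (A n) x)"
proof -
  have I: "0 \<le> I" "0 < measure M (A n)" unfolding I_def using measure_atom_pos[of n] by simp_all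
  from WCE_dual_test(3)[OF assms(1-3), of 1, folded f_def I_def] show ?thesis
  proof eventually_elim
    case (elim x)
    show ?case
    proof (cases "x \<in> A n")
      case True
      then have "\<bar>T f x\<bar> = \<bar>w x\<bar> * (I / measure M (A n))"
        using elim I by (simp add: abs_mult)
      then have "\<bar>T f x\<bar> powr p = \<bar>w x\<bar> powr p * (I / measure M (A n)) powr p"
        using I by (simp add: powr_mult del: times_divide_eq_right)
      then show ?thesis using True by simp
    qed simp
  qed
qed

lemma w_integrable_on_atom:
  assumes [measurable]: "S \<in> sets M" and "S \<subseteq> A n"
    and int: "integrable M (\<lambda>x. \<bar>u x\<bar> powr q * indicator S x)"
    and pos: "0 < (\<integral>x. \<bar>u x\<bar> powr q * indicator S x \<partial>M)"
  shows "integrable M (\<lambda>x. \<bar>w x\<bar> powr p * indicator (A n) x)"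
proof -
  define f where "f = (\<lambda>x. 1 * dual_pow q (u x) * indicator S x)"
  define I where "I = (\<integral>x. \<bar>u x\<bar> powr q * indicator S x \<partial>M)"
  have f: "memLp p M f" unfolding f_def by (rule WCE_dual_test(1)[OF assms(1-3)])
  have [measurable]: "T f \<in> borel_measurable M" using f by (rule T_measurable)
  have "integrable M (\<lambda>x. \<bar>T f x\<bar> powr p * indicator (A n) x)"
    using memLp_T[OF f] by (intro integrable_real_mult_indicator) (auto simp: memLp_def)
  then have "integrable M (\<lambda>x. (I / measure M (A n)) powr p * (\<bar>w x\<bar> powr p * indicator (A n) x))"
    by (rule integrable_cong_AE_imp[OF _ _ abs_WCE_dual_test_powr[OF assms(1-3), folded f_def I_def]])
      measurable
  then show ?thesis using pos measure_atom_pos[of n] unfolding I_def by simp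
qed

lemma dual_test_bound:
  assumes C: "\<And>f. memLp p M f \<Longrightarrow> Lp_norm p M (T f) \<le> C * Lp_norm p M f"
    and [measurable]: "S \<in> sets M" and "S \<subseteq> A n"
    and int: "integrable M (\<lambda>x. \<bar>u x\<bar> powr q * indicator S x)"
    and wi: "integrable M (\<lambda>x. \<bar>w x\<bar> powr p * indicator (A n) x)"
  defines "I \<equiv> \<integral>x. \<bar>u x\<bar> powr q * indicator S x \<partial>M"
  shows "I / measure M (A n) * w_int n powr (1/p) \<le> C * I powr (1/p)"
proof -
  define f where "f = (\<lambda>x. 1 * dual_pow q (u x) * indicator S x)"
  note test = WCE_dual_test[OF assms(2-4), of 1, folded f_def I_def]
  have I: "0 \<le> I / measure M (A n)" unfolding I_def using measure_atom_pos[of n] by simp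
  have [measurable]: "T f \<in> borel_measurable M" using test(1) by (rule T_measurable)
  have "(\<integral>x. \<bar>T f x\<bar> powr p * indicator (A n) x \<partial>M)
      = (\<integral>x. (I / measure M (A n)) powr p * (\<bar>w x\<bar> powr p * indicator (A n) x) \<partial>M)"
    by (rule integral_cong_AE[OF _ _ abs_WCE_dual_test_powr[OF assms(2-4), folded f_def I_def]])
      measurable
  then have "(I / measure M (A n)) powr p * w_int n = (\<integral>x. \<bar>T f x\<bar> powr p * indicator (A n) x \<partial>M)"
    unfolding w_int_def by simp
  also have "\<dots> \<le> (\<integral>x. \<bar>T f x\<bar> powr p \<partial>M)"
  proof -
    have Ti: "integrable M (\<lambda>x. \<bar>T f x\<bar> powr p)" using memLp_T[OF test(1)] by (simp add: memLp_def)
    show ?thesis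
      by (rule integral_mono[OF integrable_real_mult_indicator[OF atom_sets Ti] Ti])
        (simp add: indicator_def)
  qed
  finally have "((I / measure M (A n)) powr p * w_int n) powr (1/p) \<le> Lp_norm p M (T f)"
    unfolding Lp_norm_def using I w_int_nonneg[of n] p_pos by (intro powr_mono2) auto
  also have "\<dots> \<le> C * Lp_norm p M f" using C[OF test(1)] .
  also have "Lp_norm p M f = I powr (1/p)" using test(2) unfolding Lp_norm_def f_def by simp
  moreover have "0 \<le> I" unfolding I_def by simp
  ultimately show ?thesis using I w_int_nonneg[of n] p_pos by (simp add: powr_mult powr_powr)
qed

definition u_trunc :: "nat \<Rightarrow> nat \<Rightarrow> 'a set" where
  "u_trunc n k = {x \<in> A n. \<bar>u x\<bar> powr q \<le> real k}"

lemma u_trunc_sets [measurable]: "u_trunc n k \<in> sets M"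
  unfolding u_trunc_def by measurable

lemma u_trunc_subset: "u_trunc n k \<subseteq> A n"
  unfolding u_trunc_def by auto

lemma integrable_u_trunc: "integrable M (\<lambda>x. \<bar>u x\<bar> powr q * indicator (u_trunc n k) x)"
  by (rule Bochner_Integration.integrable_bound[OF integrable_const_indicator_atom[of "real k" n]])
    (auto simp: u_trunc_def indicator_def intro!: AE_I2)

lemma exists_u_trunc_pos:
  assumes "\<not> (AE x in M. x \<in> A n \<longrightarrow> u x = 0)"
  shows "\<exists>k. 0 < (\<integral>x. \<bar>u x\<bar> powr q * indicator (u_trunc n k) x \<partial>M)"
proof (rule ccontr)
  assume "\<nexists>k. 0 < (\<integral>x. \<bar>u x\<bar> powr q * indicator (u_trunc n k) x \<partial>M)"
  moreover have "0 \<le> (\<integral>x. \<bar>u x\<bar> powr q * indicator (u_trunc n k) x \<partial>M)" for k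
    by simp
  ultimately have "(\<integral>x. \<bar>u x\<bar> powr q * indicator (u_trunc n k) x \<partial>M) = 0" for k
    by (meson not_less order.antisym)
  then have "AE x in M. \<bar>u x\<bar> powr q * indicator (u_trunc n k) x = 0" for k
    using integral_nonneg_eq_0_iff_AE[OF integrable_u_trunc] by simp
  then have "AE x in M. \<forall>k. \<bar>u x\<bar> powr q * indicator (u_trunc n k) x = 0"
    by (subst AE_all_countable) blast
  then have "AE x in M. x \<in> A n \<longrightarrow> u x = 0"
  proof eventually_elim
    case (elim x)
    show ?case
    proof
      assume "x \<in> A n"
      then have "x \<in> u_trunc n (nat \<lceil>\<bar>u x\<bar> powr q\<rceil>)"
        unfolding u_trunc_def by (simp add: real_nat_ceiling_ge)
      then show "u x = 0" using elim by (auto dest: spec[of _ "nat \<lceil>\<bar>u x\<bar> powr q\<rceil>"])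
    qed
  qed
  with assms show False ..
qed

lemma integral_u_trunc_le:
  assumes C: "\<And>f. memLp p M f \<Longrightarrow> Lp_norm p M (T f) \<le> C * Lp_norm p M f"
    and wi: "integrable M (\<lambda>x. \<bar>w x\<bar> powr p * indicator (A n) x)" and W: "0 < w_int n"
  shows "(\<integral>x. \<bar>u x\<bar> powr q * indicator (u_trunc n k) x \<partial>M)
    \<le> \<bar>C * measure M (A n) / w_int n powr (1/p)\<bar> powr q"
proof -
  define I where "I = (\<integral>x. \<bar>u x\<bar> powr q * indicator (u_trunc n k) x \<partial>M)"
  define D where "D = C * measure M (A n) / w_int n powr (1/p)"
  have "I \<le> \<bar>D\<bar> powr q"
  proof (cases "I = 0")
    case False
    then have I: "0 < I" unfolding I_def by (simp add: order_less_le)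
    have bound: "I / measure M (A n) * w_int n powr (1/p) \<le> C * I powr (1/p)"
      unfolding I_def by (rule dual_test_bound[OF C u_trunc_sets u_trunc_subset integrable_u_trunc wi])
    have "I powr (1/p) * (I powr (1/q) * w_int n powr (1/p)) = I * w_int n powr (1/p)"
      using I conjugate by (simp add: mult.assoc[symmetric] powr_add[symmetric])
    also have "\<dots> \<le> I powr (1/p) * (C * measure M (A n))"
      using bound measure_atom_pos[of n] by (simp add: field_simps)
    finally have "I powr (1/q) * w_int n powr (1/p) \<le> C * measure M (A n)"
      using I by (simp add: mult_le_cancel_left_pos)
    then have "I powr (1/q) \<le> D"
      unfolding D_def using W by (simp add: field_simps)
    also have "\<dots> \<le> \<bar>D\<bar>" by (rule abs_ge_self)
    finally have le: "I powr (1/q) \<le> \<bar>D\<bar>" .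
    have "(I powr (1/q)) powr q \<le> \<bar>D\<bar> powr q"
      using q_gt_1 by (intro powr_mono2[OF _ _ le]) simp_all
    moreover have "(I powr (1/q)) powr q = I" using I q_gt_1 by (simp add: powr_powr)
    ultimately show ?thesis by simp
  qed simp
  then show ?thesis unfolding I_def D_def .
qed

text \<open>Test \<open>T\<close> on the dual functions of the truncations of \<open>u\<close> to \<open>A n\<close>: if \<open>u\<close> is not
  null on \<open>A n\<close> this makes \<open>|w|\<^sup>p\<close> integrable on \<open>A n\<close>, and if moreover \<open>w\<close> is not null
  there, boundedness of \<open>T\<close> bounds the truncated integrals of \<open>|u|\<^sup>q\<close>.\<close>
lemma degenerate_atom:
  assumes "\<not> regular_atom n"
  shows "(AE x in M. x \<in> A n \<longrightarrow> u x = 0) \<or> (AE x in M. x \<in> A n \<longrightarrow> w x = 0)"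
proof (rule ccontr)
  assume "\<not> ?thesis"
  then have u_nz: "\<not> (AE x in M. x \<in> A n \<longrightarrow> u x = 0)" and w_nz: "\<not> (AE x in M. x \<in> A n \<longrightarrow> w x = 0)"
    by auto
  obtain C where C: "\<And>f. memLp p M f \<Longrightarrow> Lp_norm p M (T f) \<le> C * Lp_norm p M f"
    using bounded unfolding bounded_op_Lp_def by blast
  obtain k0 where "0 < (\<integral>x. \<bar>u x\<bar> powr q * indicator (u_trunc n k0) x \<partial>M)"
    using exists_u_trunc_pos[OF u_nz] ..
  then have wi: "integrable M (\<lambda>x. \<bar>w x\<bar> powr p * indicator (A n) x)"
    by (rule w_integrable_on_atom[OF u_trunc_sets u_trunc_subset integrable_u_trunc])
  have W: "0 < w_int n"
  proof (rule ccontr)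
    assume "\<not> 0 < w_int n"
    then have "AE x in M. \<bar>w x\<bar> powr p * indicator (A n) x = 0"
      using integral_nonneg_eq_0_iff_AE[OF wi] w_int_nonneg[of n] unfolding w_int_def by auto
    then have "AE x in M. x \<in> A n \<longrightarrow> w x = 0" by eventually_elim auto
    with w_nz show False ..
  qed
  have "integrable M (\<lambda>x. \<bar>u x\<bar> powr q * indicator (A n) x)"
  proof (rule integrable_of_bounded_truncations)
    show "integrable M (\<lambda>x. \<bar>u x\<bar> powr q * indicator {x \<in> A n. \<bar>u x\<bar> powr q \<le> real k} x)" for k
      using integrable_u_trunc[of n k] unfolding u_trunc_def .
    show "(\<integral>x. \<bar>u x\<bar> powr q * indicator {x \<in> A n. \<bar>u x\<bar> powr q \<le> real k} x \<partial>M)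
        \<le> \<bar>C * measure M (A n) / w_int n powr (1/p)\<bar> powr q" for k
      using integral_u_trunc_le[OF C wi W, of k] unfolding u_trunc_def .
  qed auto
  with wi assms show False unfolding regular_atom_def by blast
qed

section \<open>Sufficiency: the rank-one decomposition\<close>

lemma regular_atom_Holder:
  assumes "regular_atom n" and f: "memLp p M f"
  shows "integrable M (\<lambda>x. u x * f x * indicator (A n) x)"
    and "\<bar>\<integral>x. u x * f x * indicator (A n) x \<partial>M\<bar> \<le> Lp_norm p M f * u_int n powr (1/q)"
proof -
  have [measurable]: "f \<in> borel_measurable M" using f by (rule memLp_borel_measurable)
  have fi: "integrable M (\<lambda>x. \<bar>f x\<bar> powr p)" using f by (simp add: memLp_def)
  have e: "\<bar>u x * indicator (A n) x\<bar> powr q = \<bar>u x\<bar> powr q * indicator (A n) x" for x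
    by (simp add: indicator_def)
  have ui: "integrable M (\<lambda>x. \<bar>u x * indicator (A n) x\<bar> powr q)"
    using assms(1) unfolding e regular_atom_def by simp
  have [measurable]: "(\<lambda>x. u x * indicator (A n) x) \<in> borel_measurable M" by measurable
  note H = Holder_inequality[OF p_gt_1 conjugate _ _ fi ui]
  show "integrable M (\<lambda>x. u x * f x * indicator (A n) x)"
    using H(1) by (simp add: ac_simps)
  have "\<bar>\<integral>x. u x * f x * indicator (A n) x \<partial>M\<bar> \<le> (\<integral>x. \<bar>f x * (u x * indicator (A n) x)\<bar> \<partial>M)"
    using integral_abs_bound[of M "\<lambda>x. u x * f x * indicator (A n) x"] by (simp add: ac_simps)
  also have "\<dots> \<le> Lp_norm p M f * u_int n powr (1/q)"
    using H(2) unfolding e Lp_norm_def u_int_def by simp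
  finally show "\<bar>\<integral>x. u x * f x * indicator (A n) x \<partial>M\<bar> \<le> Lp_norm p M f * u_int n powr (1/q)" .
qed

definition atom_functional :: "nat \<Rightarrow> ('a \<Rightarrow> real) \<Rightarrow> real" where
  "atom_functional n f =
    (if regular_atom n then (\<integral>x. u x * f x * indicator (A n) x \<partial>M) / measure M (A n) else 0)"

definition atom_vector :: "nat \<Rightarrow> 'a \<Rightarrow> real" where
  "atom_vector n x = (if regular_atom n then w x * indicator (A n) x else 0)"

lemma atom_vector_vanishes: "x \<notin> A n \<Longrightarrow> atom_vector n x = 0"
  by (simp add: atom_vector_def)

lemma WCE_eq_atom_rank_one:
  assumes f: "memLp p M f"
  shows "AE x in M. \<forall>n. x \<in> A n \<longrightarrow> T f x = atom_functional n f * atom_vector n x"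
proof -
  have [measurable]: "f \<in> borel_measurable M" using f by (rule memLp_borel_measurable)
  have "AE x in M. x \<in> A n \<longrightarrow> T f x = atom_functional n f * atom_vector n x" for n
  proof (cases "regular_atom n")
    case True
    from WCE_on_atom[OF f regular_atom_Holder(1)[OF True f]] show ?thesis
      by eventually_elim (simp add: atom_functional_def atom_vector_def True)
  next
    case False
    then consider "AE x in M. x \<in> A n \<longrightarrow> u x = 0" | "AE x in M. x \<in> A n \<longrightarrow> w x = 0"
      using degenerate_atom by blast
    then show ?thesis
    proof cases
      case 1
      then have ae0: "AE x in M. 0 = u x * f x * indicator (A n) x"
        by eventually_elim (auto simp: indicator_def)
      have int0: "integrable M (\<lambda>x. u x * f x * indicator (A n) x)"
        by (rule integrable_cong_AE_imp[OF integrable_zero _ ae0]) measurable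
      have zero: "(\<integral>x. u x * f x * indicator (A n) x \<partial>M) = 0"
        using ae0 by (intro integral_eq_zero_AE) (auto elim: eventually_mono)
      from WCE_on_atom[OF f int0] show ?thesis
        by eventually_elim (simp add: atom_functional_def False zero)
    next
      case 2
      then show ?thesis
        unfolding WCE_def by eventually_elim (simp add: atom_functional_def False)
    qed
  qed
  then show ?thesis by (subst AE_all_countable) blast
qed

lemma abs_atom_functional_le:
  assumes "memLp p M f"
  shows "\<bar>atom_functional n f\<bar>
    \<le> (if regular_atom n then u_int n powr (1/q) / measure M (A n) else 0) * Lp_norm p M f"
proof (cases "regular_atom n")
  case True
  then have "\<bar>atom_functional n f\<bar> \<le> Lp_norm p M f * u_int n powr (1/q) / measure M (A n)"
    using regular_atom_Holder(2)[OF True assms] measure_atom_pos[of n]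
    by (simp add: atom_functional_def divide_right_mono)
  then show ?thesis using True by (simp add: mult.commute)
qed (simp add: atom_functional_def)

lemma Lp_functional_atom_functional: "Lp_functional p M (atom_functional n)"
  unfolding Lp_functional_def
proof (intro conjI allI impI)
  fix f g assume f: "memLp p M f" and g: "memLp p M g"
  show "atom_functional n (\<lambda>x. f x + g x) = atom_functional n f + atom_functional n g"
  proof (cases "regular_atom n")
    case True
    have "(\<integral>x. u x * (f x + g x) * indicator (A n) x \<partial>M)
        = (\<integral>x. u x * f x * indicator (A n) x + u x * g x * indicator (A n) x \<partial>M)"
      by (simp add: algebra_simps)
    also have "\<dots> = (\<integral>x. u x * f x * indicator (A n) x \<partial>M) + (\<integral>x. u x * g x * indicator (A n) x \<partial>M)"
      using regular_atom_Holder(1)[OF True f] regular_atom_Holder(1)[OF True g] by simp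
    finally show ?thesis by (simp add: atom_functional_def True add_divide_distrib)
  qed (simp add: atom_functional_def)
next
  fix c f
  show "atom_functional n (\<lambda>x. c * f x) = c * atom_functional n f"
    by (simp add: atom_functional_def ac_simps)
next
  show "\<exists>C. \<forall>f. memLp p M f \<longrightarrow> \<bar>atom_functional n f\<bar> \<le> C * Lp_norm p M f"
    using abs_atom_functional_le by blast
qed

lemma memLp_atom_vector: "memLp p M (atom_vector n)"
  and Lp_norm_atom_vector: "Lp_norm p M (atom_vector n) = (if regular_atom n then w_int n powr (1/p) else 0)"
proof -
  have e: "\<bar>atom_vector n x\<bar> powr p = (if regular_atom n then \<bar>w x\<bar> powr p * indicator (A n) x else 0)" for x
    by (simp add: atom_vector_def indicator_def)
  have [measurable]: "atom_vector n \<in> borel_measurable M"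
    unfolding atom_vector_def[abs_def] by measurable
  show "memLp p M (atom_vector n)"
  proof (cases "regular_atom n")
    case True
    then have "integrable M (\<lambda>x. \<bar>w x\<bar> powr p * indicator (A n) x)" by (simp add: regular_atom_def)
    then show ?thesis unfolding memLp_def e using True by simp
  qed (simp add: memLp_def e)
  show "Lp_norm p M (atom_vector n) = (if regular_atom n then w_int n powr (1/p) else 0)"
    unfolding Lp_norm_def e w_int_def by simp
qed

lemma dual_norm_atom_functional_mult_le:
  "dual_norm p M (atom_functional n) * Lp_norm p M (atom_vector n) \<le> atom_coeff n"
proof -
  have dn: "dual_norm p M (atom_functional n)
      \<le> (if regular_atom n then u_int n powr (1/q) / measure M (A n) else 0)"
    using abs_atom_functional_le measure_atom_pos[of n] by (intro dual_norm_le) auto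
  show ?thesis
  proof (cases "regular_atom n")
    case True
    then have "dual_norm p M (atom_functional n) \<le> u_int n powr (1/q) / measure M (A n)"
      using dn by simp
    then have "dual_norm p M (atom_functional n) * w_int n powr (1/p)
        \<le> u_int n powr (1/q) / measure M (A n) * w_int n powr (1/p)"
      by (rule mult_right_mono) simp
    moreover have "Lp_norm p M (atom_vector n) = w_int n powr (1/p)"
      using True by (simp add: Lp_norm_atom_vector)
    ultimately have "dual_norm p M (atom_functional n) * Lp_norm p M (atom_vector n)
        \<le> u_int n powr (1/q) / measure M (A n) * w_int n powr (1/p)"
      by simp
    then show ?thesis unfolding atom_coeff_def by (simp add: field_simps)
  qed (use atom_coeff_nonneg[of n] in \<open>simp add: Lp_norm_atom_vector\<close>)
qed

lemma WCE_partial_sums_tendsto: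
  assumes f: "memLp p M f"
  shows "(\<lambda>N. Lp_norm p M (\<lambda>x. T f x - (\<Sum>k<N. atom_functional k f * atom_vector k x))) \<longlonglongrightarrow> 0"
proof -
  have [measurable]: "T f \<in> borel_measurable M" using f by (rule T_measurable)
  have [measurable]: "atom_vector k \<in> borel_measurable M" for k
    using memLp_atom_vector by (rule memLp_borel_measurable)
  define B where "B N = space M - (\<Union>m<N. A m)" for N
  have [measurable]: "B N \<in> sets M" for N unfolding B_def by measurable
  have "AE x in M. T f x - (\<Sum>k<N. atom_functional k f * atom_vector k x) = T f x * indicator (B N) x" for N
    using AE_space WCE_eq_atom_rank_one[OF f]
  proof eventually_elim
    case (elim x)
    then obtain m where m: "x \<in> A m" using atom_exists by blast
    have "(\<Sum>k<N. atom_functional k f * atom_vector k x) = (if m < N then T f x else 0)"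
      using sum_vanishing_off_atoms[OF m, of "\<lambda>k x. atom_functional k f * atom_vector k x"]
        elim(2) m by (simp add: atom_vector_vanishes)
    moreover have "x \<in> B N \<longleftrightarrow> \<not> m < N" using m elim(1) atom_unique by (auto simp: B_def)
    ultimately show ?case by simp
  qed
  then have "Lp_norm p M (\<lambda>x. T f x - (\<Sum>k<N. atom_functional k f * atom_vector k x))
      = Lp_norm p M (\<lambda>x. T f x * indicator (B N) x)" for N
    by (intro Lp_norm_cong_AE) measurable
  then show ?thesis
    using Lp_norm_indicator_tail_tendsto_0[OF p_pos memLp_T[OF f] atom_sets cover] by (simp add: B_def)
qed

lemma nuclear_if_summable:
  assumes "summable atom_coeff"
  shows "nuclear_Lp p M T"
  unfolding nuclear_Lp_def
proof (intro conjI exI[of _ atom_functional] exI[of _ atom_vector] allI impI)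
  show "summable (\<lambda>n. dual_norm p M (atom_functional n) * Lp_norm p M (atom_vector n))"
  proof (rule summable_comparison_test[OF _ assms])
    have "0 \<le> dual_norm p M (atom_functional n) * Lp_norm p M (atom_vector n)" for n
      by (intro mult_nonneg_nonneg dual_norm_nonneg[OF Lp_functional_atom_functional p_pos] Lp_norm_nonneg)
    then show "\<exists>N. \<forall>n\<ge>N. norm (dual_norm p M (atom_functional n) * Lp_norm p M (atom_vector n)) \<le> atom_coeff n"
      using dual_norm_atom_functional_mult_le by auto
  qed
qed (use bounded Lp_functional_atom_functional memLp_atom_vector WCE_partial_sums_tendsto in auto)

section \<open>Necessity: testing a nuclear representation\<close>

lemma atom_coeff_posD:
  assumes "0 < atom_coeff n"
  shows "regular_atom n" "0 < w_int n" "0 < u_int n"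
proof -
  have W: "w_int n \<noteq> 0" and U: "u_int n \<noteq> 0" using assms unfolding atom_coeff_def by auto
  then show "0 < w_int n" "0 < u_int n"
    using w_int_nonneg[of n] u_int_nonneg[of n] by simp_all
  show "regular_atom n"
    using W U not_integrable_integral_eq unfolding regular_atom_def w_int_def u_int_def by blast
qed

text \<open>A norming pair for \<open>T\<close> on the atom \<open>A n\<close>, made of the Hoelder extremals of \<open>u\<close> and \<open>w\<close>.\<close>
definition test_vector :: "nat \<Rightarrow> 'a \<Rightarrow> real" where
  "test_vector n x = (if 0 < atom_coeff n
     then 1 / u_int n powr (1/p) * dual_pow q (u x) * indicator (A n) x else 0)"

definition test_dual :: "nat \<Rightarrow> 'a \<Rightarrow> real" where
  "test_dual n x = (if 0 < atom_coeff n
     then 1 / w_int n powr (1/q) * dual_pow p (w x) * indicator (A n) x else 0)"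

lemma test_vector_vanishes: "x \<notin> A n \<Longrightarrow> test_vector n x = 0"
  by (simp add: test_vector_def)

lemma test_dual_vanishes: "x \<notin> A n \<Longrightarrow> test_dual n x = 0"
  by (simp add: test_dual_def)

lemma test_dual_measurable [measurable]: "test_dual n \<in> borel_measurable M"
  unfolding test_dual_def[abs_def] by measurable

lemma test_vector_eq:
  assumes "0 < atom_coeff n"
  shows "test_vector n = (\<lambda>x. (1 / u_int n powr (1/p)) * dual_pow q (u x) * indicator (A n) x)"
  using assms by (simp add: test_vector_def[abs_def])

lemma test_dual_eq:
  assumes "0 < atom_coeff n"
  shows "test_dual n x = (1 / w_int n powr (1/q)) * dual_pow p (w x) * indicator (A n) x"
  using assms by (simp add: test_dual_def)

lemma memLp_test_vector: "memLp p M (test_vector n)"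
  and integral_test_vector_powr_le: "(\<integral>x. \<bar>test_vector n x\<bar> powr p \<partial>M) \<le> 1"
proof -
  have "memLp p M (test_vector n) \<and> (\<integral>x. \<bar>test_vector n x\<bar> powr p \<partial>M) \<le> 1"
  proof (cases "0 < atom_coeff n")
    case True
    note reg = atom_coeff_posD[OF True]
    have ui: "integrable M (\<lambda>x. \<bar>u x\<bar> powr q * indicator (A n) x)"
      using reg(1) by (simp add: regular_atom_def)
    note test = WCE_dual_test[OF atom_sets subset_refl ui, of "1 / u_int n powr (1/p)", folded u_int_def]
    have "\<bar>1 / u_int n powr (1/p)\<bar> powr p * u_int n = 1"
      using reg(3) p_pos by (simp add: powr_divide powr_powr)
    then show ?thesis using test(1,2) unfolding test_vector_eq[OF True] by simp
  qed (simp add: test_vector_def[abs_def] memLp_zero)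
  then show "memLp p M (test_vector n)" "(\<integral>x. \<bar>test_vector n x\<bar> powr p \<partial>M) \<le> 1" by auto
qed

lemma integrable_test_dual_powr: "integrable M (\<lambda>x. \<bar>test_dual n x\<bar> powr q)"
  and integral_test_dual_powr_le: "(\<integral>x. \<bar>test_dual n x\<bar> powr q \<partial>M) \<le> 1"
proof -
  have "integrable M (\<lambda>x. \<bar>test_dual n x\<bar> powr q) \<and> (\<integral>x. \<bar>test_dual n x\<bar> powr q \<partial>M) \<le> 1"
  proof (cases "0 < atom_coeff n")
    case True
    note reg = atom_coeff_posD[OF True]
    define c where "c = 1 / w_int n powr (1/q)"
    have pw: "\<bar>test_dual n x\<bar> powr q = \<bar>c\<bar> powr q * (\<bar>w x\<bar> powr p * indicator (A n) x)" for x
      unfolding test_dual_eq[OF True, folded c_def] using abs_dual_pow_powr[OF p_dual, of "w x"] q_gt_1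
      by (cases "x \<in> A n") (simp_all add: abs_mult powr_mult)
    have wi: "integrable M (\<lambda>x. \<bar>w x\<bar> powr p * indicator (A n) x)"
      using reg(1) by (simp add: regular_atom_def)
    have "\<bar>c\<bar> powr q * w_int n = 1"
      using reg(2) q_gt_1 by (simp add: c_def powr_divide powr_powr)
    then show ?thesis unfolding pw using wi by (simp add: w_int_def)
  qed (simp add: test_dual_def)
  then show "integrable M (\<lambda>x. \<bar>test_dual n x\<bar> powr q)" "(\<integral>x. \<bar>test_dual n x\<bar> powr q \<partial>M) \<le> 1"
    by auto
qed

lemma test_dual_pairing:
  assumes "memLp p M f"
  shows "integrable M (\<lambda>x. test_dual n x * f x)" and "\<bar>\<integral>x. test_dual n x * f x \<partial>M\<bar> \<le> Lp_norm p M f"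
  using abs_integral_mult_le_Lp_norm[OF p_gt_1 conjugate assms test_dual_measurable
      integrable_test_dual_powr integral_test_dual_powr_le] by auto

lemma WCE_test_vector_on_atom:
  assumes "0 < atom_coeff n"
  shows "AE x in M. x \<in> A n \<longrightarrow>
    T (test_vector n) x = w x * (u_int n powr (1/q) / measure M (A n))"
proof -
  note reg = atom_coeff_posD[OF assms]
  define c where "c = 1 / u_int n powr (1/p)"
  have ui: "integrable M (\<lambda>x. \<bar>u x\<bar> powr q * indicator (A n) x)"
    using reg(1) by (simp add: regular_atom_def)
  have "c * u_int n = u_int n powr (1/q)"
    using reg(3) inverse_q by (simp add: c_def powr_diff)
  with WCE_dual_test(3)[OF atom_sets subset_refl ui, of c, folded u_int_def test_vector_eq[OF assms, folded c_def]]
  show ?thesis by (auto elim!: eventually_mono)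
qed

lemma test_dual_mult_w:
  assumes "0 < atom_coeff n"
  shows "test_dual n x * w x = 1 / w_int n powr (1/q) * (\<bar>w x\<bar> powr p * indicator (A n) x)"
proof -
  define c where "c = 1 / w_int n powr (1/q)"
  have "test_dual n x * w x = c * (w x * dual_pow p (w x)) * indicator (A n) x"
    unfolding test_dual_eq[OF assms, folded c_def] by (simp only: ac_simps)
  also have "\<dots> = c * (\<bar>w x\<bar> powr p * indicator (A n) x)"
    by (simp only: mult_dual_pow mult.assoc)
  finally show ?thesis unfolding c_def .
qed

lemma integral_test_dual_WCE_test_vector:
  "(\<integral>x. test_dual n x * T (test_vector n) x \<partial>M) = atom_coeff n"
proof (cases "0 < atom_coeff n")
  case True
  define c where "c = 1 / w_int n powr (1/q)"
  define K where "K = u_int n powr (1/q) / measure M (A n)"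
  have [measurable]: "T (test_vector n) \<in> borel_measurable M"
    using memLp_test_vector by (rule T_measurable)
  from WCE_test_vector_on_atom[OF True, folded K_def]
  have "AE x in M. test_dual n x * T (test_vector n) x = K * (c * (\<bar>w x\<bar> powr p * indicator (A n) x))"
  proof eventually_elim
    case (elim x)
    show ?case
    proof (cases "x \<in> A n")
      case True
      then have "test_dual n x * T (test_vector n) x = K * (test_dual n x * w x)"
        using elim by simp
      then show ?thesis by (simp only: test_dual_mult_w[OF \<open>0 < atom_coeff n\<close>, folded c_def])
    qed (simp add: test_dual_vanishes)
  qed
  then have "(\<integral>x. test_dual n x * T (test_vector n) x \<partial>M)
      = (\<integral>x. K * (c * (\<bar>w x\<bar> powr p * indicator (A n) x)) \<partial>M)"
    by (rule integral_cong_AE[rotated 2]) measurable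
  also have "\<dots> = K * (c * w_int n)" by (simp add: w_int_def)
  also have "c * w_int n = w_int n powr (1/p)"
    using atom_coeff_posD(2)[OF True] inverse_q by (simp add: c_def powr_diff)
  finally show ?thesis unfolding K_def atom_coeff_def by simp
next
  case False
  then show ?thesis using atom_coeff_nonneg[of n] by (simp add: test_dual_def)
qed

lemma abs_integral_test_dual_powr_le:
  assumes f: "memLp p M f"
  shows "\<bar>\<integral>x. test_dual n x * f x \<partial>M\<bar> powr p \<le> (\<integral>x. \<bar>f x\<bar> powr p * indicator (A n) x \<partial>M)"
proof -
  have [measurable]: "f \<in> borel_measurable M" using f by (rule memLp_borel_measurable)
  have e: "\<bar>f x * indicator (A n) x\<bar> powr p = \<bar>f x\<bar> powr p * indicator (A n) x" for x
    by (simp add: indicator_def)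
  have fA: "memLp p M (\<lambda>x. f x * indicator (A n) x)"
    using f unfolding memLp_def e by (auto intro: integrable_real_mult_indicator)
  have "(\<lambda>x. test_dual n x * f x) = (\<lambda>x. test_dual n x * (f x * indicator (A n) x))"
    by (rule ext) (auto simp: indicator_def test_dual_vanishes)
  then have "\<bar>\<integral>x. test_dual n x * f x \<partial>M\<bar> \<le> Lp_norm p M (\<lambda>x. f x * indicator (A n) x)"
    using test_dual_pairing(2)[OF fA, of n] by simp
  then have "\<bar>\<integral>x. test_dual n x * f x \<partial>M\<bar> powr p \<le> Lp_norm p M (\<lambda>x. f x * indicator (A n) x) powr p"
    using p_pos by (intro powr_mono2) auto
  also have "\<dots> = (\<integral>x. \<bar>f x\<bar> powr p * indicator (A n) x \<partial>M)"
    using p_pos unfolding Lp_norm_def e by (simp add: powr_powr)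
  finally show ?thesis .
qed

lemma Lp_norm_sum_test_vectors_le:
  assumes z: "memLp p M z"
  shows "Lp_norm p M (\<lambda>x. \<Sum>n<N. (\<integral>y. test_dual n y * z y \<partial>M) * test_vector n x) \<le> Lp_norm p M z"
proof -
  define c where "c n = (\<integral>y. test_dual n y * z y \<partial>M)" for n
  have zi: "integrable M (\<lambda>x. \<bar>z x\<bar> powr p)" using z by (simp add: memLp_def)
  have gi: "integrable M (\<lambda>x. \<bar>test_vector n x\<bar> powr p)" for n
    using memLp_test_vector by (simp add: memLp_def)
  \<comment> \<open>the test vectors have disjoint supports\<close>
  have pointwise: "\<bar>\<Sum>n<N. c n * test_vector n x\<bar> powr p = (\<Sum>n<N. \<bar>c n\<bar> powr p * \<bar>test_vector n x\<bar> powr p)"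
    if x: "x \<in> space M" for x
  proof -
    obtain m where m: "x \<in> A m" using atom_exists[OF x] by blast
    have "(\<Sum>n<N. c n * test_vector n x) = (if m < N then c m * test_vector m x else 0)"
      using m by (rule sum_vanishing_off_atoms) (simp add: test_vector_vanishes)
    moreover have "(\<Sum>n<N. \<bar>c n\<bar> powr p * \<bar>test_vector n x\<bar> powr p)
        = (if m < N then \<bar>c m\<bar> powr p * \<bar>test_vector m x\<bar> powr p else 0)"
      using m by (rule sum_vanishing_off_atoms) (simp add: test_vector_vanishes)
    ultimately show ?thesis by (simp add: abs_mult powr_mult)
  qed
  have "(\<integral>x. \<bar>\<Sum>n<N. c n * test_vector n x\<bar> powr p \<partial>M)
      = (\<Sum>n<N. \<bar>c n\<bar> powr p * (\<integral>x. \<bar>test_vector n x\<bar> powr p \<partial>M))"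
    using gi by (simp add: Bochner_Integration.integral_cong[OF refl pointwise] Bochner_Integration.integral_sum)
  also have "\<dots> \<le> (\<Sum>n<N. \<integral>x. \<bar>z x\<bar> powr p * indicator (A n) x \<partial>M)"
  proof (rule sum_mono)
    fix n
    have "\<bar>c n\<bar> powr p * (\<integral>x. \<bar>test_vector n x\<bar> powr p \<partial>M) \<le> \<bar>c n\<bar> powr p"
      using integral_test_vector_powr_le[of n] by (simp add: mult_left_le)
    also have "\<dots> \<le> (\<integral>x. \<bar>z x\<bar> powr p * indicator (A n) x \<partial>M)"
      unfolding c_def by (rule abs_integral_test_dual_powr_le[OF z])
    finally show "\<bar>c n\<bar> powr p * (\<integral>x. \<bar>test_vector n x\<bar> powr p \<partial>M)
        \<le> (\<integral>x. \<bar>z x\<bar> powr p * indicator (A n) x \<partial>M)" .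
  qed
  also have "\<dots> \<le> (\<integral>x. \<bar>z x\<bar> powr p \<partial>M)"
    using zi by (rule sum_integral_atoms_le) simp
  finally show ?thesis
    unfolding Lp_norm_def c_def using p_pos by (intro powr_mono2) auto
qed

lemma abs_sum_functional_test_le:
  assumes \<psi>: "Lp_functional p M \<psi>" and z: "memLp p M z"
  shows "\<bar>\<Sum>n<N. \<psi> (test_vector n) * (\<integral>x. test_dual n x * z x \<partial>M)\<bar> \<le> dual_norm p M \<psi> * Lp_norm p M z"
proof -
  define G where "G x = (\<Sum>n<N. (\<integral>y. test_dual n y * z y \<partial>M) * test_vector n x)" for x
  have G: "memLp p M G" unfolding G_def[abs_def] by (rule memLp_sum[OF p_pos memLp_test_vector])
  have "\<psi> G = (\<Sum>n<N. (\<integral>y. test_dual n y * z y \<partial>M) * \<psi> (test_vector n))"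
    unfolding G_def[abs_def] by (rule Lp_functional_sum[OF \<psi> p_pos memLp_test_vector])
  then have "\<bar>\<Sum>n<N. \<psi> (test_vector n) * (\<integral>x. test_dual n x * z x \<partial>M)\<bar> = \<bar>\<psi> G\<bar>"
    by (simp add: mult.commute)
  also have "\<dots> \<le> dual_norm p M \<psi> * Lp_norm p M G"
    by (rule abs_le_dual_norm[OF \<psi> p_pos G])
  also have "\<dots> \<le> dual_norm p M \<psi> * Lp_norm p M z"
    unfolding G_def[abs_def]
    by (rule mult_left_mono[OF Lp_norm_sum_test_vectors_le[OF z] dual_norm_nonneg[OF \<psi> p_pos]])
  finally show ?thesis .
qed

lemma expansion_pairing_tendsto:
  assumes z: "\<And>k. memLp p M (z k)"
    and expansion: "(\<lambda>K. Lp_norm p M (\<lambda>x. T (test_vector n) x - (\<Sum>k<K. \<psi> k (test_vector n) * z k x)))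
      \<longlonglongrightarrow> 0"
  shows "(\<lambda>K. \<Sum>k<K. \<psi> k (test_vector n) * (\<integral>x. test_dual n x * z k x \<partial>M)) \<longlonglongrightarrow> atom_coeff n"
proof -
  define g where "g = test_vector n"
  define R where "R K x = T g x - (\<Sum>k<K. \<psi> k g * z k x)" for K x
  define S where "S K = (\<Sum>k<K. \<psi> k g * (\<integral>x. test_dual n x * z k x \<partial>M))" for K
  have Tg: "memLp p M (T g)" unfolding g_def by (rule memLp_T[OF memLp_test_vector])
  have R: "memLp p M (R K)" for K
    unfolding R_def[abs_def] by (rule memLp_diff[OF p_pos Tg memLp_sum[OF p_pos z]])
  have pairing_R: "(\<integral>x. test_dual n x * R K x \<partial>M) = atom_coeff n - S K" for K
  proof -
    have "(\<lambda>x. test_dual n x * R K x)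
        = (\<lambda>x. test_dual n x * T g x - (\<Sum>k<K. \<psi> k g * (test_dual n x * z k x)))"
      unfolding R_def by (rule ext) (simp add: right_diff_distrib sum_distrib_left ac_simps)
    moreover have "integrable M (\<lambda>x. \<Sum>k<K. \<psi> k g * (test_dual n x * z k x))"
      using test_dual_pairing(1)[OF z] by (intro Bochner_Integration.integrable_sum integrable_mult_right)
    ultimately have "(\<integral>x. test_dual n x * R K x \<partial>M)
        = (\<integral>x. test_dual n x * T g x \<partial>M) - (\<integral>x. (\<Sum>k<K. \<psi> k g * (test_dual n x * z k x)) \<partial>M)"
      using test_dual_pairing(1)[OF Tg] by (simp only: Bochner_Integration.integral_diff)
    also have "(\<integral>x. (\<Sum>k<K. \<psi> k g * (test_dual n x * z k x)) \<partial>M) = S K"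
      unfolding S_def using test_dual_pairing(1)[OF z] by (subst Bochner_Integration.integral_sum) auto
    finally show ?thesis unfolding g_def by (simp only: integral_test_dual_WCE_test_vector)
  qed
  have bound: "\<bar>atom_coeff n - S K\<bar> \<le> Lp_norm p M (R K)" for K
  proof -
    have "\<bar>\<integral>x. test_dual n x * R K x \<partial>M\<bar> \<le> Lp_norm p M (R K)"
      by (rule test_dual_pairing(2)[OF R])
    then show ?thesis by (simp only: pairing_R)
  qed
  have "(\<lambda>K. Lp_norm p M (R K)) \<longlonglongrightarrow> 0"
    using expansion unfolding R_def[abs_def] g_def .
  then have "(\<lambda>K. atom_coeff n - S K) \<longlonglongrightarrow> 0"
    by (rule Lim_null_comparison[OF always_eventually, rotated]) (simp add: bound)
  then have "(\<lambda>K. atom_coeff n - (atom_coeff n - S K)) \<longlonglongrightarrow> atom_coeff n - 0"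
    by (intro tendsto_diff tendsto_const)
  then show ?thesis unfolding S_def g_def by simp
qed

lemma summable_if_nuclear:
  assumes "nuclear_Lp p M T"
  shows "summable atom_coeff"
proof -
  obtain \<psi> :: "nat \<Rightarrow> ('a \<Rightarrow> real) \<Rightarrow> real" and z :: "nat \<Rightarrow> 'a \<Rightarrow> real"
    where \<psi>: "\<And>k. Lp_functional p M (\<psi> k)" and z: "\<And>k. memLp p M (z k)"
      and summable: "summable (\<lambda>k. dual_norm p M (\<psi> k) * Lp_norm p M (z k))"
      and expansion: "\<And>f. memLp p M f \<Longrightarrow>
        (\<lambda>K. Lp_norm p M (\<lambda>x. T f x - (\<Sum>k<K. \<psi> k f * z k x))) \<longlonglongrightarrow> 0"
    using assms unfolding nuclear_Lp_def by blast
  define d where "d k = dual_norm p M (\<psi> k) * Lp_norm p M (z k)" for k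
  have d_nonneg: "0 \<le> d k" for k
    unfolding d_def by (intro mult_nonneg_nonneg dual_norm_nonneg[OF \<psi> p_pos] Lp_norm_nonneg)
  have partial_sums: "(\<Sum>n<N. atom_coeff n) \<le> suminf d" for N
  proof -
    have lim: "(\<lambda>K. \<Sum>n<N. \<Sum>k<K. \<psi> k (test_vector n) * (\<integral>x. test_dual n x * z k x \<partial>M))
        \<longlonglongrightarrow> (\<Sum>n<N. atom_coeff n)"
      by (intro tendsto_sum expansion_pairing_tendsto[OF z] expansion memLp_test_vector)
    have bound: "(\<Sum>n<N. \<Sum>k<K. \<psi> k (test_vector n) * (\<integral>x. test_dual n x * z k x \<partial>M)) \<le> suminf d"
      for K
    proof -
      have "(\<Sum>n<N. \<Sum>k<K. \<psi> k (test_vector n) * (\<integral>x. test_dual n x * z k x \<partial>M))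
          = (\<Sum>k<K. \<Sum>n<N. \<psi> k (test_vector n) * (\<integral>x. test_dual n x * z k x \<partial>M))"
        by (rule sum.swap)
      also have "\<dots> \<le> (\<Sum>k<K. d k)"
        unfolding d_def by (intro sum_mono) (rule abs_le_D1[OF abs_sum_functional_test_le[OF \<psi> z]])
      also have "\<dots> \<le> suminf d"
        using summable d_nonneg unfolding d_def by (intro sum_le_suminf) auto
      finally show ?thesis .
    qed
    show ?thesis by (rule LIMSEQ_le_const2[OF lim]) (use bound in blast)
  qed
  show ?thesis
  proof (rule bounded_imp_summable)
    show "(\<Sum>k\<le>n. atom_coeff k) \<le> suminf d" for n
      using partial_sums[of "Suc n"] by (simp add: lessThan_Suc_atMost)
  qed (rule atom_coeff_nonneg)
qed

end

theorem proposition2p5: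
  fixes M F :: "'a measure" and p q :: real and w u :: "'a \<Rightarrow> real" and A :: "nat \<Rightarrow> 'a set"
  assumes "complete_measure M"
    and "sigma_finite_measure M"
    and "sigma_finite_subalgebra M F"
    and "1 < p" and "1 / p + 1 / q = 1"
    and "w \<in> borel_measurable M" and "u \<in> borel_measurable M"
    and "\<And>n. F_atom M F (A n)"
    and "disjoint_family A"
    and "(\<Union>n. A n) = space M"
    and "bounded_op_Lp p M (WCE M F w u)"
  shows "nuclear_Lp p M (WCE M F w u) \<longleftrightarrow>
    summable (\<lambda>n. cond_exp_atom M (\<lambda>x. \<bar>w x\<bar> powr p) (A n) powr (1 / p)
                 * cond_exp_atom M (\<lambda>x. \<bar>u x\<bar> powr q) (A n) powr (1 / q))"
proof -
  interpret wce_on_atoms M F A p q w u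
    by (intro wce_on_atoms.intro atomic_partition.intro atomic_partition_axioms.intro
        wce_on_atoms_axioms.intro) (rule assms)+
  have coeff: "(\<lambda>n. cond_exp_atom M (\<lambda>x. \<bar>w x\<bar> powr p) (A n) powr (1 / p)
      * cond_exp_atom M (\<lambda>x. \<bar>u x\<bar> powr q) (A n) powr (1 / q)) = atom_coeff"
    by (rule ext) (rule cond_exp_atom_product_eq_atom_coeff)
  show ?thesis unfolding coeff using nuclear_if_summable summable_if_nuclear by blast
qed

end
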